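(* Let $d\ge2$, $L\in\mathbb{N}$, and let $f:[0,1)^d\to[0,\infty)$ be $L$-piecewise constant. There is a constant $C>0$ depending only on $d$ such that for every $\varepsilon>0$, every integer $k_1\ge L$, every integer $k_2\ge C\|f\|_{L^\infty((0,1)^d)}k_1^{d-1}/\varepsilon^d$, and every $\mathbf{b}\in\Phi(k_1,k_2)$, \[\sum_{j\in\mathcal{H}_{\mathbf b}}p_{\mathbf b,j}^{1/d}\le\bar J+\varepsilon.\]
   Context: $x\leqq y$ means $x_i\le y_i$ for all $i$, $x<y$ means $x_i<y_i$ for all $i$. Extend $f$ by $0$ outside $[0,1)^d$. For a multiindex $\alpha$ with integer entries $1\le\alpha_i\le L$, $Q_{L,\alpha}=\{x\in[0,1)^d:\alpha-(1,\dots,1)\leqq Lx<\alpha\}$; $f$ is $L$-piecewise constant if it is constant on each $Q_{L,\alpha}$. $\mathcal{A}$ is the set of $\gamma\in C^1([0,1];\mathbb{R}^d)$ with all components of $\gamma'(t)$ nonnegative and $\gamma'(t)\ne0$ for every $t$; $J(\gamma)=\int_0^1 f(\gamma(t))^{1/d}(\gamma_1'(t)\cdots\gamma_d'(t))^{1/d}dt$; $\bar J=\sup_{\gamma\in\mathcal{A}}J(\gamma)$. Given integers $k_1,k_2\ge1$, set $\Delta x=1/k_1$ and $\Delta y=\Delta x/k_2$. $\Phi(k_1,k_2)$ is the set of sequences $\mathbf b=(b_j)_{j=1}^{k_1}$ of multiindices $b_j$ with nonnegative integer entries in $\mathbb{N}^{d-1}$ such that $b_1\leqq\cdots\leqq b_{k_1}$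 and $\|b_j\|_\infty\le k_1k_2$. For $\mathbf b\in\Phi(k_1,k_2)$ set $z_{\mathbf b,0}=0\in\mathbb{R}^d$ and $z_{\mathbf b,j}=(b_j\Delta y,\,j\Delta x)\in\mathbb{R}^{d-1}\times\mathbb{R}$ for $j\ge1$; $R_{\mathbf b,j}=\{x\in[0,1)^d:z_{\mathbf b,j-1}-(1,\dots,1,0)\Delta y\leqq x<z_{\mathbf b,j}\}$ for $1\le j\le k_1$; $p_{\mathbf b,j}=\int_{R_{\mathbf b,j}}f(x)\,dx$; and $\mathcal{H}_{\mathbf b}=\{j: R_{\mathbf b,j}\subset Q_{L,\alpha}\text{ for some }\alpha\}$. *)

theory Defs
  imports "HOL-Analysis.Analysis" "HOL-Probability.Essential_Supremum"
begin

text \<open>Points of R^d are modelled as elements of (real^'m) \<times> real, where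
  'm is a finite index type with CARD('m) = d - 1 (so d \<ge> 2 automatically).
  The last coordinate is the second component.\<close>

definition dim_of :: "('m::finite) itself \<Rightarrow> nat" where
  "dim_of _ = CARD('m) + 1"

definition unit_cube :: "((real^'m::finite) \<times> real) set" where
  "unit_cube = {x. (\<forall>i. 0 \<le> fst x $ i \<and> fst x $ i < 1) \<and> 0 \<le> snd x \<and> snd x < 1}"

definition open_unit_cube :: "((real^'m::finite) \<times> real) set" where
  "open_unit_cube = {x. (\<forall>i. 0 < fst x $ i \<and> fst x $ i < 1) \<and> 0 < snd x \<and> snd x < 1}"

text \<open>Q_{L,alpha} for a multiindex alpha (entries meant to be in 1..L).\<close>
definition Qcube :: "nat \<Rightarrow> ((nat^'m::finite) \<times> nat) \<Rightarrow> ((real^'m) \<times> real) set" where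
  "Qcube L \<alpha> = {x \<in> unit_cube.
     (\<forall>i. real (fst \<alpha> $ i) - 1 \<le> real L * fst x $ i \<and> real L * fst x $ i < real (fst \<alpha> $ i)) \<and>
     real (snd \<alpha>) - 1 \<le> real L * snd x \<and> real L * snd x < real (snd \<alpha>)}"

definition valid_index :: "nat \<Rightarrow> ((nat^'m::finite) \<times> nat) \<Rightarrow> bool" where
  "valid_index L \<alpha> \<longleftrightarrow> (\<forall>i. 1 \<le> fst \<alpha> $ i \<and> fst \<alpha> $ i \<le> L) \<and> 1 \<le> snd \<alpha> \<and> snd \<alpha> \<le> L"

definition piecewise_constant :: "nat \<Rightarrow> ((real^'m::finite) \<times> real \<Rightarrow> real) \<Rightarrow> bool" where
  "piecewise_constant L f \<longleftrightarrow>
     (\<forall>\<alpha>. valid_index L \<alpha> \<longrightarrow> (\<exists>c. \<forall>x\<in>Qcube L \<alpha>. f x = c))"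

definition Linf_norm :: "((real^'m::finite) \<times> real \<Rightarrow> real) \<Rightarrow> ereal" where
  "Linf_norm f = esssup (restrict_space lborel open_unit_cube) (\<lambda>x. ereal \<bar>f x\<bar>)"

definition curve_deriv :: "(real \<Rightarrow> (real^'m::finite) \<times> real) \<Rightarrow> real \<Rightarrow> (real^'m) \<times> real" where
  "curve_deriv \<gamma> t = vector_derivative \<gamma> (at t within {0..1})"

definition admissible :: "(real \<Rightarrow> (real^'m::finite) \<times> real) \<Rightarrow> bool" where
  "admissible \<gamma> \<longleftrightarrow>
     (\<forall>t\<in>{0..1}. \<gamma> differentiable (at t within {0..1})) \<and>
     continuous_on {0..1} (curve_deriv \<gamma>) \<and>
     (\<forall>t\<in>{0..1}. (\<forall>i. 0 \<le> fst (curve_deriv \<gamma> t) $ i) \<and> 0 \<le> snd (curve_deriv \<gamma> t)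
                  \<and> curve_deriv \<gamma> t \<noteq> 0)"

definition Jfun :: "((real^'m::finite) \<times> real \<Rightarrow> real) \<Rightarrow> (real \<Rightarrow> (real^'m) \<times> real) \<Rightarrow> real" where
  "Jfun f \<gamma> = integral {0..1} (\<lambda>t.
     f (\<gamma> t) powr (1 / real (dim_of TYPE('m))) *
     ((\<Prod>i\<in>UNIV. fst (curve_deriv \<gamma> t) $ i) * snd (curve_deriv \<gamma> t)) powr (1 / real (dim_of TYPE('m))))"

definition Jbar :: "((real^'m::finite) \<times> real \<Rightarrow> real) \<Rightarrow> real" where
  "Jbar f = Sup (Jfun f ` {\<gamma>. admissible \<gamma>})"

text \<open>Phi(k1,k2): sequences b_1 \<le> ... \<le> b_{k1} of multiindices in N^{d-1}
  with sup-norm at most k1*k2 (only the values at 1..k1 matter).\<close>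
definition Phi :: "nat \<Rightarrow> nat \<Rightarrow> (nat \<Rightarrow> nat^'m::finite) set" where
  "Phi k1 k2 = {b. (\<forall>j\<in>{1..k1}. \<forall>j'\<in>{1..k1}. j \<le> j' \<longrightarrow> (\<forall>i. b j $ i \<le> b j' $ i)) \<and>
                   (\<forall>j\<in>{1..k1}. \<forall>i. b j $ i \<le> k1 * k2)}"

definition zpt :: "nat \<Rightarrow> nat \<Rightarrow> (nat \<Rightarrow> nat^'m::finite) \<Rightarrow> nat \<Rightarrow> (real^'m) \<times> real" where
  "zpt k1 k2 b j = (if j = 0 then 0 else
     ((\<chi> i. real (b j $ i) * (1 / real k1 / real k2)), real j * (1 / real k1)))"

definition Rset :: "nat \<Rightarrow> nat \<Rightarrow> (nat \<Rightarrow> nat^'m::finite) \<Rightarrow> nat \<Rightarrow> ((real^'m) \<times> real) set" where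
  "Rset k1 k2 b j = {x \<in> unit_cube.
     (\<forall>i. fst (zpt k1 k2 b (j - 1)) $ i - 1 / real k1 / real k2 \<le> fst x $ i \<and>
          fst x $ i < fst (zpt k1 k2 b j) $ i) \<and>
     snd (zpt k1 k2 b (j - 1)) \<le> snd x \<and> snd x < snd (zpt k1 k2 b j)}"

definition pval :: "((real^'m::finite) \<times> real \<Rightarrow> real) \<Rightarrow> nat \<Rightarrow> nat \<Rightarrow> (nat \<Rightarrow> nat^'m) \<Rightarrow> nat \<Rightarrow> real" where
  "pval f k1 k2 b j = integral (Rset k1 k2 b j) f"

definition Hset :: "nat \<Rightarrow> nat \<Rightarrow> nat \<Rightarrow> (nat \<Rightarrow> nat^'m::finite) \<Rightarrow> nat set" where
  "Hset L k1 k2 b = {j \<in> {1..k1}. \<exists>\<alpha>::(nat^'m) \<times> nat. valid_index L \<alpha> \<and> Rset k1 k2 b j \<subseteq> Qcube L \<alpha>}"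

end

theory Submission
  imports Defs
begin

text \<open>Each \<open>p\<^sub>j\<^sup>1\<^sup>/\<^sup>d\<close> is split, by subadditivity of \<open>t \<mapsto> t\<^sup>1\<^sup>/\<^sup>d\<close>, into the root of the mass of \<open>f\<close>
  on the box spanned by \<open>z\<^sub>j\<^sub>-\<^sub>1\<close> and \<open>z\<^sub>j\<close> and the root of the mass on the remaining layer of
  width \<open>\<Delta>y\<close>. Each layer term is at most \<open>\<epsilon>/(2k\<^sub>1)\<close> as soon as
  \<open>k\<^sub>2 \<ge> 4\<^sup>d d \<parallel>f\<parallel>\<^sub>\<infinity> k\<^sub>1\<^sup>d\<^sup>-\<^sup>1/\<epsilon>\<^sup>d\<close>, so the layers contribute at most \<open>\<epsilon>/2\<close>.
  The box terms are realised by an admissible curve that, during \<open>[(j-1)/k\<^sub>1, j/k\<^sub>1]\<close>, runs from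
  \<open>z\<^sub>j\<^sub>-\<^sub>1\<close> to \<open>z\<^sub>j\<close> through the box, the first \<open>d-1\<close> coordinates following a smooth step
  \<open>\<psi>\<^sub>m\<close> of slope at most \<open>a\<^sub>m = (2m+1)/(2m)\<close> and the last coordinate moving linearly.
  On that interval \<open>f\<close> is constant, so the integrand of \<open>J\<close> is at least \<open>a\<^sub>m\<^sup>-\<^sup>1\<^sup>/\<^sup>d\<close> times
  \<open>\<psi>\<^sub>m'\<close> times the box term, and the box terms sum to at most \<open>a\<^sub>m\<^sup>1\<^sup>/\<^sup>d J\<close>. Since
  \<open>J \<le> d \<parallel>f\<parallel>\<^sub>\<infinity>\<^sup>1\<^sup>/\<^sup>d\<close> for every admissible curve, choosing \<open>m\<close> large makes the loss at most \<open>\<epsilon>/2\<close>.\<close>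

section \<open>A smooth monotone step\<close>

text \<open>Since \<open>\<integral>\<^sub>0\<^sup>1 (1 - (2x - 1)\<^sup>2\<^sup>m) dx = 2m/(2m+1)\<close>, the step \<open>smooth_step m\<close> rises from 0 to 1
  on \<open>[0,1]\<close>; its derivative vanishes at both ends and is at most \<open>smooth_step_slope m\<close>,
  which tends to 1.\<close>

definition smooth_step_slope :: "nat \<Rightarrow> real" where
  "smooth_step_slope m = (2 * real m + 1) / (2 * real m)"

definition smooth_step_poly :: "nat \<Rightarrow> real \<Rightarrow> real" where
  "smooth_step_poly m x =
     smooth_step_slope m * (x - ((2*x - 1) ^ (2*m+1) + 1) / (2 * (2 * real m + 1)))"

definition smooth_step_deriv :: "nat \<Rightarrow> real \<Rightarrow> real" where
  "smooth_step_deriv m x = smooth_step_slope m * max 0 (1 - (2*x - 1) ^ (2*m))"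

definition smooth_step :: "nat \<Rightarrow> real \<Rightarrow> real" where
  "smooth_step m x = (if x \<in> {..0} then 0 else if x \<in> {..1} then smooth_step_poly m x else 1)"

lemma smooth_step_poly_has_derivative:
  "(smooth_step_poly m has_real_derivative smooth_step_slope m * (1 - (2*x - 1) ^ (2*m)))
     (at x within S)"
  unfolding smooth_step_poly_def
  apply (rule derivative_eq_intros refl | simp)+
  apply (simp add: field_simps)
  done

lemma smooth_step_slope_ge_1: "m \<ge> 1 \<Longrightarrow> smooth_step_slope m \<ge> 1"
  by (simp add: smooth_step_slope_def)

lemma smooth_step_poly_0: "smooth_step_poly m 0 = 0"
  by (simp add: smooth_step_poly_def)

lemma smooth_step_poly_1:
  assumes "m \<ge> 1"
  shows "smooth_step_poly m 1 = 1"
proof -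
  have "real m * 4 > 0" "real m * (real m * 8) > 0" using assms by simp_all
  hence "real m * 4 + real m * (real m * 8) \<noteq> 0" by linarith
  thus ?thesis by (simp add: smooth_step_poly_def smooth_step_slope_def field_simps)
qed

lemma even_power_ge_1: "\<bar>y\<bar> \<ge> 1 \<Longrightarrow> (y::real) ^ (2*m) \<ge> 1"
  using one_le_power[of "\<bar>y\<bar>" "2*m"] by (simp add: power_even_abs)

lemma even_power_le_1: "\<bar>y\<bar> \<le> 1 \<Longrightarrow> (y::real) ^ (2*m) \<le> 1"
  using power_le_one[of "\<bar>y\<bar>" "2*m"] by (simp add: power_even_abs)

lemma even_power_less_1: "\<bar>y\<bar> < 1 \<Longrightarrow> m \<ge> 1 \<Longrightarrow> (y::real) ^ (2*m) < 1"
  using power_less_one_iff[of "\<bar>y\<bar>" "2*m"] by (simp add: power_even_abs)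

lemma smooth_step_deriv_outside: "x \<le> 0 \<or> x \<ge> 1 \<Longrightarrow> smooth_step_deriv m x = 0"
  using even_power_ge_1[of "2*x - 1" m] by (auto simp: smooth_step_deriv_def)

lemma smooth_step_deriv_inside:
  "0 \<le> x \<Longrightarrow> x \<le> 1 \<Longrightarrow> smooth_step_deriv m x = smooth_step_slope m * (1 - (2*x - 1) ^ (2*m))"
  using even_power_le_1[of "2*x - 1" m] by (simp add: smooth_step_deriv_def)

lemma smooth_step_deriv_pos: "m \<ge> 1 \<Longrightarrow> 0 < x \<Longrightarrow> x < 1 \<Longrightarrow> smooth_step_deriv m x > 0"
  using even_power_less_1[of "2*x - 1" m] smooth_step_slope_ge_1[of m]
  by (simp add: smooth_step_deriv_def)

lemma smooth_step_deriv_nonneg: "m \<ge> 1 \<Longrightarrow> smooth_step_deriv m x \<ge> 0"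
  using smooth_step_slope_ge_1[of m] by (simp add: smooth_step_deriv_def)

lemma smooth_step_deriv_le_slope: "m \<ge> 1 \<Longrightarrow> smooth_step_deriv m x \<le> smooth_step_slope m"
  using smooth_step_slope_ge_1[of m] zero_le_even_power[of "2*m" "2*x - 1"]
  by (simp add: smooth_step_deriv_def)

lemma continuous_on_smooth_step_deriv: "continuous_on S (smooth_step_deriv m)"
  unfolding smooth_step_deriv_def by (intro continuous_intros)

lemma smooth_step_has_derivative:
  assumes "m \<ge> 1"
  shows "(smooth_step m has_real_derivative smooth_step_deriv m x) (at x)"
proof -
  have upper: "((\<lambda>x. if x \<in> {..1} then smooth_step_poly m x else 1) has_real_derivative
      (if y \<in> {..1} then smooth_step_slope m * (1 - (2*y - 1) ^ (2*m)) else 0)) (at y within S)"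
    for y S
  proof -
    have "((\<lambda>x. if x \<in> {..1} then smooth_step_poly m x else 1) has_real_derivative
        (if y \<in> {..1} then smooth_step_slope m * (1 - (2*y - 1) ^ (2*m)) else 0)) (at y)"
      unfolding has_real_derivative_iff_has_vector_derivative
      by (rule has_vector_derivative_If_within_closures[where T = "{1<..}"])
        (use assms in \<open>auto simp: smooth_step_poly_1 smooth_step_poly_has_derivative
          has_real_derivative_iff_has_vector_derivative[symmetric] intro!: derivative_eq_intros\<close>)
    thus ?thesis by (rule has_field_derivative_at_within)
  qed
  have "(smooth_step m has_real_derivative
     (if x \<in> {..0} then 0 else if x \<in> {..1} then smooth_step_slope m * (1 - (2*x - 1) ^ (2*m)) else 0))
     (at x)"
    unfolding has_real_derivative_iff_has_vector_derivative smooth_step_def[abs_def]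
    apply (rule has_vector_derivative_If_within_closures[where T = "{0<..}"])
       apply (auto simp: smooth_step_poly_0 has_real_derivative_iff_has_vector_derivative[symmetric]
        intro!: derivative_eq_intros)
    using upper[of x] upper[of 0] by simp_all
  moreover have "(if x \<in> {..0} then 0 else if x \<in> {..1} then
      smooth_step_slope m * (1 - (2*x - 1) ^ (2*m)) else 0) = smooth_step_deriv m x"
    using smooth_step_deriv_outside smooth_step_deriv_inside by auto
  ultimately show ?thesis by simp
qed

lemma smooth_step_nonpos: "x \<le> 0 \<Longrightarrow> smooth_step m x = 0"
  by (simp add: smooth_step_def)

lemma smooth_step_ge_1: "m \<ge> 1 \<Longrightarrow> x \<ge> 1 \<Longrightarrow> smooth_step m x = 1"
  by (auto simp: smooth_step_def smooth_step_poly_0 smooth_step_poly_1)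

lemma continuous_on_smooth_step: "m \<ge> 1 \<Longrightarrow> continuous_on S (smooth_step m)"
  by (meson DERIV_isCont continuous_at_imp_continuous_on smooth_step_has_derivative)

lemma smooth_step_strict_bounds:
  assumes "m \<ge> 1" "0 < x" "x < 1"
  shows "0 < smooth_step m x" "smooth_step m x < 1"
proof -
  have incr: "smooth_step m y < smooth_step m z" if "0 \<le> y" "y < z" "z \<le> 1" for y z
    using that assms(1)
    by (intro DERIV_pos_imp_increasing_open[OF \<open>y < z\<close>] continuous_on_smooth_step)
      (use smooth_step_has_derivative smooth_step_deriv_pos in force)
  show "0 < smooth_step m x" using incr[of 0 x] assms by (simp add: smooth_step_nonpos)
  show "smooth_step m x < 1" using incr[of x 1] assms by (simp add: smooth_step_ge_1)
qed

section \<open>Curves made of smooth steps\<close>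

definition step_curve ::
    "nat \<Rightarrow> nat \<Rightarrow> (nat \<Rightarrow> (real^'m::finite) \<times> real) \<Rightarrow> real \<Rightarrow> (real^'m) \<times> real" where
  "step_curve m k W t = (\<Sum>j\<in>{1..k}. smooth_step m (real k * t - real (j - 1)) *\<^sub>R W j) + (0, t)"

definition step_curve_deriv ::
    "nat \<Rightarrow> nat \<Rightarrow> (nat \<Rightarrow> (real^'m::finite) \<times> real) \<Rightarrow> real \<Rightarrow> (real^'m) \<times> real" where
  "step_curve_deriv m k W t =
     (\<Sum>j\<in>{1..k}. (real k * smooth_step_deriv m (real k * t - real (j - 1))) *\<^sub>R W j) + (0, 1)"

lemma shifted_smooth_step_has_derivative:
  assumes "m \<ge> 1"
  shows "((\<lambda>t. smooth_step m (real k * t - real (j - 1))) has_real_derivative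
           real k * smooth_step_deriv m (real k * t - real (j - 1))) (at t within S)"
proof -
  have "((\<lambda>t. real k * t - real (j - 1)) has_real_derivative real k) (at t)"
    by (auto intro!: derivative_eq_intros)
  from DERIV_chain2[OF smooth_step_has_derivative[OF assms] this]
  show ?thesis by (simp add: mult.commute has_field_derivative_at_within)
qed

lemma step_curve_has_vector_derivative:
  assumes "m \<ge> 1"
  shows "(step_curve m k W has_vector_derivative step_curve_deriv m k W t) (at t within S)"
proof -
  have steps: "((\<lambda>x. smooth_step m (real k * x - real (j - 1)) *\<^sub>R W j) has_vector_derivative
      (real k * smooth_step_deriv m (real k * t - real (j - 1))) *\<^sub>R W j) (at t within S)" for j
    using has_vector_derivative_scaleR[OF shifted_smooth_step_has_derivative[OF assms]
        has_vector_derivative_const]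
    by simp
  have last: "((\<lambda>x. (0::real^'m, x)) has_vector_derivative (0,1)) (at t within S)"
    by (rule has_vector_derivative_Pair)
      (auto intro: has_vector_derivative_const has_vector_derivative_id)
  show ?thesis
    unfolding step_curve_def step_curve_deriv_def
    by (rule has_vector_derivative_add[OF has_vector_derivative_sum[OF steps] last])
qed

lemma curve_deriv_step_curve:
  assumes "m \<ge> 1" "t \<in> {0..1}"
  shows "curve_deriv (step_curve m k W) t = step_curve_deriv m k W t"
proof -
  have "(step_curve m k W has_vector_derivative step_curve_deriv m k W t) (at t within cbox 0 1)"
    by (rule step_curve_has_vector_derivative[OF assms(1)])
  from vector_derivative_within_cbox[OF _ _ this] show ?thesis
    using assms by (auto simp: curve_deriv_def cbox_interval)
qed

lemma fst_step_curve_deriv: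
  "fst (step_curve_deriv m k W t) $ i =
     (\<Sum>j\<in>{1..k}. real k * smooth_step_deriv m (real k * t - real (j - 1)) * fst (W j) $ i)"
  by (simp add: step_curve_deriv_def fst_sum)

lemma snd_step_curve_deriv:
  "snd (step_curve_deriv m k W t) =
     (\<Sum>j\<in>{1..k}. real k * smooth_step_deriv m (real k * t - real (j - 1)) * snd (W j)) + 1"
  by (simp add: step_curve_deriv_def snd_sum)

lemma fst_step_curve:
  "fst (step_curve m k W t) $ i = (\<Sum>j\<in>{1..k}. smooth_step m (real k * t - real (j - 1)) * fst (W j) $ i)"
  by (simp add: step_curve_def fst_sum)

lemma snd_step_curve:
  "snd (step_curve m k W t) = (\<Sum>j\<in>{1..k}. smooth_step m (real k * t - real (j - 1)) * snd (W j)) + t"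
  by (simp add: step_curve_def snd_sum)

lemma admissible_step_curve:
  assumes "m \<ge> 1" "\<And>j i. fst (W j) $ i \<ge> 0" "\<And>j. snd (W j) \<ge> 0"
  shows "admissible (step_curve m k W)"
  unfolding admissible_def
proof (intro conjI ballI allI)
  fix t :: real assume t: "t \<in> {0..1}"
  show "step_curve m k W differentiable at t within {0..1}"
    using step_curve_has_vector_derivative[OF assms(1)]
    unfolding differentiable_def has_vector_derivative_def by blast
  show "0 \<le> fst (curve_deriv (step_curve m k W) t) $ i" for i
    unfolding curve_deriv_step_curve[OF assms(1) t] fst_step_curve_deriv
    using assms smooth_step_deriv_nonneg by (intro sum_nonneg mult_nonneg_nonneg) auto
  have "0 \<le> (\<Sum>j\<in>{1..k}. real k * smooth_step_deriv m (real k * t - real (j - 1)) * snd (W j))"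
    using assms smooth_step_deriv_nonneg by (intro sum_nonneg mult_nonneg_nonneg) auto
  thus "0 \<le> snd (curve_deriv (step_curve m k W) t)" "curve_deriv (step_curve m k W) t \<noteq> 0"
    unfolding curve_deriv_step_curve[OF assms(1) t] using snd_step_curve_deriv[of m k W t] by auto
next
  have "continuous_on {0..1} (step_curve_deriv m k W)"
    unfolding step_curve_deriv_def
    by (intro continuous_intros continuous_on_compose2[OF continuous_on_smooth_step_deriv]) auto
  thus "continuous_on {0..1} (curve_deriv (step_curve m k W))"
    using curve_deriv_step_curve[OF assms(1)] by (metis continuous_on_cong)
qed

section \<open>Bounds for the functional J\<close>

definition coordinate_sum :: "(real^'m::finite) \<times> real \<Rightarrow> real" where
  "coordinate_sum x = (\<Sum>i\<in>UNIV. fst x $ i) + snd x"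

definition closed_unit_cube :: "((real^'m::finite) \<times> real) set" where
  "closed_unit_cube = {x. (\<forall>i. 0 \<le> fst x $ i \<and> fst x $ i \<le> 1) \<and> 0 \<le> snd x \<and> snd x \<le> 1}"

definition Jfun_integrand ::
    "((real^'m::finite) \<times> real \<Rightarrow> real) \<Rightarrow> (real \<Rightarrow> (real^'m) \<times> real) \<Rightarrow> real \<Rightarrow> real" where
  "Jfun_integrand f \<gamma> t = f (\<gamma> t) powr (1 / real (dim_of TYPE('m))) *
     ((\<Prod>i\<in>UNIV. fst (curve_deriv \<gamma> t) $ i) * snd (curve_deriv \<gamma> t)) powr (1 / real (dim_of TYPE('m)))"

lemma Jfun_eq_integral: "Jfun f \<gamma> = integral {0..1} (Jfun_integrand f \<gamma>)"
  by (simp add: Jfun_def Jfun_integrand_def[abs_def])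

lemma bounded_linear_coordinate_sum: "bounded_linear coordinate_sum"
  unfolding coordinate_sum_def[abs_def]
  by (intro bounded_linear_add bounded_linear_sum bounded_linear_snd
      bounded_linear_compose[OF bounded_linear_vec_nth bounded_linear_fst])

lemma power_powr_inverse: "0 \<le> (s::real) \<Longrightarrow> n > 0 \<Longrightarrow> (s ^ n) powr (1 / real n) = s"
  by (cases "s = 0") (simp_all add: powr_realpow[symmetric] powr_powr)

lemma root_prod_le_coordinate_sum:
  fixes v :: "(real^'m::finite) \<times> real"
  assumes "\<forall>i. 0 \<le> fst v $ i" "0 \<le> snd v"
  shows "((\<Prod>i\<in>UNIV. fst v $ i) * snd v) powr (1 / real (dim_of TYPE('m))) \<le> coordinate_sum v"
proof -
  define s where "s = coordinate_sum v"
  have s0: "s \<ge> 0" using assms unfolding s_def coordinate_sum_def by (simp add: sum_nonneg)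
  have "fst v $ i \<le> s" for i
  proof -
    have "fst v $ i \<le> (\<Sum>i\<in>UNIV. fst v $ i)"
      using assms by (intro member_le_sum) auto
    thus ?thesis using assms unfolding s_def coordinate_sum_def by simp
  qed
  hence "(\<Prod>i\<in>UNIV. fst v $ i) \<le> (\<Prod>i\<in>(UNIV::'m set). s)"
    using assms by (intro prod_mono) auto
  moreover have "snd v \<le> s" using assms unfolding s_def coordinate_sum_def by (simp add: sum_nonneg)
  ultimately have "(\<Prod>i\<in>UNIV. fst v $ i) * snd v \<le> s ^ CARD('m) * s"
    using assms s0 by (intro mult_mono) (auto simp: prod_nonneg)
  also have "\<dots> = s ^ dim_of TYPE('m)" by (simp add: dim_of_def)
  finally have "((\<Prod>i\<in>UNIV. fst v $ i) * snd v) powr (1 / real (dim_of TYPE('m)))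
        \<le> (s ^ dim_of TYPE('m)) powr (1 / real (dim_of TYPE('m)))"
    using assms by (intro powr_mono2) (auto simp: prod_nonneg)
  also have "\<dots> = s" using s0 by (intro power_powr_inverse) (auto simp: dim_of_def)
  finally show ?thesis unfolding s_def .
qed

lemma admissible_has_vector_derivative:
  "admissible \<gamma> \<Longrightarrow> t \<in> {0..1} \<Longrightarrow> (\<gamma> has_vector_derivative curve_deriv \<gamma> t) (at t within {0..1})"
  unfolding admissible_def curve_deriv_def by (auto simp: vector_derivative_works[symmetric])

lemma admissible_continuous_on: "admissible \<gamma> \<Longrightarrow> continuous_on {0..1} \<gamma>"
  unfolding continuous_on_eq_continuous_within
  using admissible_has_vector_derivative has_vector_derivative_continuous by blast

lemma admissible_curve_deriv_nonneg:
  "admissible \<gamma> \<Longrightarrow> t \<in> {0..1} \<Longrightarrow> (\<forall>i. 0 \<le> fst (curve_deriv \<gamma> t) $ i) \<and> 0 \<le> snd (curve_deriv \<gamma> t)"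
  unfolding admissible_def by auto

lemma Jfun_integrand_le:
  fixes \<gamma> :: "real \<Rightarrow> (real^'m::finite) \<times> real"
  assumes "0 \<le> f (\<gamma> t)" "f (\<gamma> t) \<le> M" "admissible \<gamma>" "t \<in> {0..1}"
  shows "Jfun_integrand f \<gamma> t \<le> M powr (1 / real (dim_of TYPE('m))) * coordinate_sum (curve_deriv \<gamma> t)"
  unfolding Jfun_integrand_def
  using assms admissible_curve_deriv_nonneg[OF assms(3,4)]
  by (intro mult_mono powr_mono2 root_prod_le_coordinate_sum) auto

lemma integral_coordinate_sum_curve_deriv:
  assumes "admissible \<gamma>" "0 \<le> a" "a \<le> b" "b \<le> 1"
  shows "((\<lambda>t. coordinate_sum (curve_deriv \<gamma> t)) has_integral
           coordinate_sum (\<gamma> b) - coordinate_sum (\<gamma> a)) {a..b}"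
proof (rule fundamental_theorem_of_calculus[OF \<open>a \<le> b\<close>])
  fix t assume t: "t \<in> {a..b}"
  have "(\<gamma> has_vector_derivative curve_deriv \<gamma> t) (at t within {a..b})"
    using admissible_has_vector_derivative[OF assms(1), of t] t assms(2-4)
    by (auto intro: has_vector_derivative_within_subset)
  thus "((\<lambda>t. coordinate_sum (\<gamma> t)) has_vector_derivative coordinate_sum (curve_deriv \<gamma> t))
      (at t within {a..b})"
    by (rule bounded_linear.has_vector_derivative[OF bounded_linear_coordinate_sum])
qed

lemma coordinate_sum_diff_le_dim:
  fixes x y :: "(real^'m::finite) \<times> real"
  assumes "x \<in> closed_unit_cube" "y \<in> closed_unit_cube"
  shows "coordinate_sum y - coordinate_sum x \<le> real (dim_of TYPE('m))"
proof -
  have "coordinate_sum y - coordinate_sum x = (\<Sum>i\<in>UNIV. fst y $ i - fst x $ i) + (snd y - snd x)"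
    by (simp add: coordinate_sum_def sum_subtractf)
  also have "\<dots> \<le> (\<Sum>i\<in>(UNIV::'m set). 1) + 1"
  proof (intro add_mono sum_mono)
    show "fst y $ i - fst x $ i \<le> 1" for i
    proof -
      have "0 \<le> fst x $ i" "fst y $ i \<le> 1" using assms by (auto simp: closed_unit_cube_def)
      thus ?thesis by linarith
    qed
  qed (use assms in \<open>auto simp: closed_unit_cube_def\<close>)
  finally show ?thesis by (simp add: dim_of_def)
qed

lemma admissible_visits_cube_within:
  assumes adm: "admissible \<gamma>" and visit: "\<exists>t\<in>{0..1}. \<gamma> t \<in> unit_cube"
  obtains a b where "0 \<le> a" "a \<le> b" "b \<le> 1" "\<gamma> a \<in> closed_unit_cube" "\<gamma> b \<in> closed_unit_cube"
    "\<And>t. t \<in> {0..1} \<Longrightarrow> \<gamma> t \<in> unit_cube \<Longrightarrow> a \<le> t \<and> t \<le> b"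
proof -
  define S where "S = {t \<in> {0..1}. \<gamma> t \<in> unit_cube}"
  have Sne: "S \<noteq> {}" using visit by (auto simp: S_def)
  have "S \<subseteq> {0..1}" by (auto simp: S_def)
  hence bdd: "bdd_below S" "bdd_above S" by (auto intro: bdd_below_mono bdd_above_mono)
  have "closed (closed_unit_cube :: ((real^'m) \<times> real) set)" unfolding closed_unit_cube_def
    by (intro closed_Collect_conj closed_Collect_all closed_Collect_le continuous_intros)
  hence "closed ({0..1} \<inter> \<gamma> -` closed_unit_cube)"
    by (rule continuous_closed_preimage[OF admissible_continuous_on[OF adm] closed_atLeastAtMost])
  moreover have "S \<subseteq> {0..1} \<inter> \<gamma> -` closed_unit_cube"
    by (auto simp: S_def closed_unit_cube_def unit_cube_def less_imp_le)
  ultimately have cl: "closure S \<subseteq> {0..1} \<inter> \<gamma> -` closed_unit_cube" by (rule closure_minimal[rotated])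
  show ?thesis
  proof
    show "Inf S \<le> Sup S" using Sne bdd by (meson cInf_le_cSup)
    show "0 \<le> Inf S" "\<gamma> (Inf S) \<in> closed_unit_cube"
      using closure_contains_Inf[OF Sne bdd(1)] cl by auto
    show "Sup S \<le> 1" "\<gamma> (Sup S) \<in> closed_unit_cube"
      using closure_contains_Sup[OF Sne bdd(2)] cl by auto
    show "Inf S \<le> t \<and> t \<le> Sup S" if "t \<in> {0..1}" "\<gamma> t \<in> unit_cube" for t
      using that bdd by (auto intro: cInf_lower cSup_upper simp: S_def)
  qed
qed

lemma Jfun_le_dim_bound:
  fixes f :: "(real^'m::finite) \<times> real \<Rightarrow> real"
  assumes f0: "\<And>x. 0 \<le> f x" and fM: "\<And>x. f x \<le> M" and fz: "\<And>x. x \<notin> unit_cube \<Longrightarrow> f x = 0"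
    and adm: "admissible \<gamma>"
  shows "Jfun f \<gamma> \<le> M powr (1 / real (dim_of TYPE('m))) * real (dim_of TYPE('m))"
proof (cases "Jfun_integrand f \<gamma> integrable_on {0..1} \<and> (\<exists>t\<in>{0..1}. \<gamma> t \<in> unit_cube)")
  case False
  moreover have "integral {0..1} (Jfun_integrand f \<gamma>) = 0"
    if "\<forall>t\<in>{0..1}. \<gamma> t \<notin> unit_cube"
    using that by (intro integral_unique has_integral_is_0) (simp add: Jfun_integrand_def fz)
  ultimately show ?thesis by (auto simp: Jfun_eq_integral not_integrable_integral)
next
  case True
  define e where "e = 1 / real (dim_of TYPE('m))"
  obtain a b where ab: "0 \<le> a" "a \<le> b" "b \<le> 1" "\<gamma> a \<in> closed_unit_cube" "\<gamma> b \<in> closed_unit_cube"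
    and inside: "\<And>t. t \<in> {0..1} \<Longrightarrow> \<gamma> t \<in> unit_cube \<Longrightarrow> a \<le> t \<and> t \<le> b"
    using admissible_visits_cube_within[OF adm] True by blast
  define h where "h t = (if t \<in> {a..b} then M powr e * coordinate_sum (curve_deriv \<gamma> t) else 0)" for t
  have "Jfun_integrand f \<gamma> t \<le> h t" if t: "t \<in> {0..1}" for t
  proof (cases "t \<in> {a..b}")
    case False
    hence "\<gamma> t \<notin> unit_cube" using inside[OF t] by auto
    thus ?thesis using False by (auto simp: h_def Jfun_integrand_def fz)
  next
    case True
    thus ?thesis using Jfun_integrand_le[OF _ _ adm t] f0 fM by (simp add: h_def e_def)
  qed
  moreover have "(h has_integral M powr e * (coordinate_sum (\<gamma> b) - coordinate_sum (\<gamma> a))) {0..1}"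
    unfolding h_def using ab integral_coordinate_sum_curve_deriv[OF adm ab(1-3)]
    by (subst has_integral_restrict) (auto intro: has_integral_mult_right)
  ultimately have "Jfun f \<gamma> \<le> M powr e * (coordinate_sum (\<gamma> b) - coordinate_sum (\<gamma> a))"
    unfolding Jfun_eq_integral using True by (metis has_integral_le integrable_integral)
  also have "\<dots> \<le> M powr e * real (dim_of TYPE('m))"
    using coordinate_sum_diff_le_dim[OF ab(4,5)] by (intro mult_left_mono) auto
  finally show ?thesis unfolding e_def .
qed

lemma Jfun_integrand_integrable:
  fixes f :: "(real^'m::finite) \<times> real \<Rightarrow> real"
  assumes fb: "f \<in> borel_measurable borel" and f0: "\<And>x. 0 \<le> f x" and fM: "\<And>x. f x \<le> M"
    and adm: "admissible \<gamma>"
  shows "Jfun_integrand f \<gamma> integrable_on {0..1}"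
proof -
  have cont_deriv: "continuous_on {0..1} (curve_deriv \<gamma>)"
    using adm by (simp add: admissible_def)
  have "\<gamma> \<in> borel_measurable (lebesgue_on {0..1})"
    by (rule continuous_imp_measurable_on_sets_lebesgue[OF admissible_continuous_on[OF adm]]) auto
  hence "(\<lambda>t. f (\<gamma> t)) \<in> borel_measurable (lebesgue_on {0..1})"
    by (rule measurable_compose[OF _ fb])
  moreover have "(\<lambda>t. (\<Prod>i\<in>UNIV. fst (curve_deriv \<gamma> t) $ i) * snd (curve_deriv \<gamma> t))
      \<in> borel_measurable (lebesgue_on {0..1})"
    using cont_deriv
    by (intro continuous_imp_measurable_on_sets_lebesgue continuous_intros) auto
  ultimately have "Jfun_integrand f \<gamma> \<in> borel_measurable (lebesgue_on {0..1})"
    unfolding Jfun_integrand_def[abs_def] by measurable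
  moreover have "continuous_on {0..1}
      (\<lambda>t. M powr (1 / real (dim_of TYPE('m))) * coordinate_sum (curve_deriv \<gamma> t))"
    using cont_deriv unfolding coordinate_sum_def by (intro continuous_intros) auto
  moreover have "norm (Jfun_integrand f \<gamma> t)
      \<le> M powr (1 / real (dim_of TYPE('m))) * coordinate_sum (curve_deriv \<gamma> t)" if "t \<in> {0..1}" for t
    using Jfun_integrand_le[OF f0 fM adm that] by (simp add: Jfun_integrand_def)
  ultimately have "Jfun_integrand f \<gamma> absolutely_integrable_on {0..1}"
    by (intro measurable_bounded_by_integrable_imp_absolutely_integrable
        integrable_continuous_interval) auto
  thus ?thesis by (simp add: absolutely_integrable_on_def)
qed

lemma Jfun_le_Jbar:
  fixes f :: "(real^'m::finite) \<times> real \<Rightarrow> real"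
  assumes "\<And>x. 0 \<le> f x" "\<And>x. f x \<le> M" "\<And>x. x \<notin> unit_cube \<Longrightarrow> f x = 0" "admissible \<gamma>"
  shows "Jfun f \<gamma> \<le> Jbar f"
proof -
  have "bdd_above (Jfun f ` {\<gamma>. admissible \<gamma>})"
    using Jfun_le_dim_bound[where f=f and M=M, OF assms(1-3)] by (intro bdd_aboveI) blast
  thus ?thesis unfolding Jbar_def using assms(4) by (intro cSup_upper) auto
qed

lemma Jbar_le_dim_bound:
  fixes f :: "(real^'m::finite) \<times> real \<Rightarrow> real"
  assumes "\<And>x. 0 \<le> f x" "\<And>x. f x \<le> M" "\<And>x. x \<notin> unit_cube \<Longrightarrow> f x = 0"
  shows "Jbar f \<le> M powr (1 / real (dim_of TYPE('m))) * real (dim_of TYPE('m))"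
  unfolding Jbar_def
proof (rule cSup_least)
  have "admissible (step_curve 1 1 (\<lambda>_. 0 :: (real^'m) \<times> real))"
    by (rule admissible_step_curve) auto
  thus "Jfun f ` {\<gamma>. admissible \<gamma>} \<noteq> {}" by blast
qed (use Jfun_le_dim_bound[where f=f and M=M, OF assms] in blast)

lemma smooth_step_deriv_other_steps:
  assumes "0 < real k * t - real (j0 - 1)" "real k * t - real (j0 - 1) < 1" "j \<noteq> j0" "j \<ge> 1" "j0 \<ge> 1"
  shows "smooth_step_deriv m (real k * t - real (j - 1)) = 0"
proof (rule smooth_step_deriv_outside)
  have "real k * t - real (j - 1) = (real k * t - real (j0 - 1)) + (real j0 - real j)"
    using assms(4,5) by (simp add: of_nat_diff)
  moreover have "real j0 - real j \<ge> 1 \<or> real j0 - real j \<le> -1" using assms(3) by linarith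
  ultimately show "real k * t - real (j - 1) \<le> 0 \<or> 1 \<le> real k * t - real (j - 1)"
    using assms(1,2) by linarith
qed

lemma sum_smooth_step_deriv_single:
  assumes "0 < real k * t - real (j0 - 1)" "real k * t - real (j0 - 1) < 1"
    "j0 \<in> A" "finite A" "\<forall>j\<in>A. j \<ge> 1"
  shows "(\<Sum>j\<in>A. F j * smooth_step_deriv m (real k * t - real (j - 1)))
       = F j0 * smooth_step_deriv m (real k * t - real (j0 - 1))"
proof -
  have "(\<Sum>j\<in>A. F j * smooth_step_deriv m (real k * t - real (j - 1)))
      = (\<Sum>j\<in>A. if j = j0 then F j0 * smooth_step_deriv m (real k * t - real (j0 - 1)) else 0)"
    using smooth_step_deriv_other_steps[OF assms(1,2)] assms(3,5) by (intro sum.cong) auto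
  thus ?thesis using assms(3,4) by simp
qed

lemma sum_smooth_step_deriv_none:
  assumes "\<forall>j\<in>A. \<not> (0 < real k * t - real (j - 1) \<and> real k * t - real (j - 1) < 1)"
  shows "(\<Sum>j\<in>A. F j * smooth_step_deriv m (real k * t - real (j - 1))) = 0"
  using assms smooth_step_deriv_outside by (intro sum.neutral) (metis linorder_not_le mult_zero_right)

lemma sum_smooth_step_split:
  assumes m1: "m \<ge> 1" and j0: "j0 \<in> {1..k}"
    and s: "0 < real k * t - real (j0 - 1)" "real k * t - real (j0 - 1) < 1"
  shows "(\<Sum>j\<in>{1..k}. smooth_step m (real k * t - real (j - 1)) * F j)
       = (\<Sum>j\<in>{1..<j0}. F j) + smooth_step m (real k * t - real (j0 - 1)) * F j0"
proof -
  have step: "smooth_step m (real k * t - real (j - 1)) = (if j < j0 then 1 else 0)"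
    if "j \<in> {1..k}" "j \<noteq> j0" for j
  proof -
    have "real k * t - real (j - 1) = (real k * t - real (j0 - 1)) + (real j0 - real j)"
      using that j0 by (simp add: of_nat_diff)
    thus ?thesis
      using that(2) s m1 by (cases "j < j0") (auto intro!: smooth_step_ge_1 smooth_step_nonpos)
  qed
  have "(\<Sum>j\<in>{1..k}. smooth_step m (real k * t - real (j - 1)) * F j)
      = (\<Sum>j\<in>{1..k}. (if j < j0 then F j else 0)
          + (if j = j0 then smooth_step m (real k * t - real (j0 - 1)) * F j0 else 0))"
    using step by (intro sum.cong) auto
  also have "\<dots> = (\<Sum>j\<in>{1..k} \<inter> {j. j < j0}. F j) + smooth_step m (real k * t - real (j0 - 1)) * F j0"
    using j0 by (simp add: sum.distrib sum.inter_restrict)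
  also have "{1..k} \<inter> {j. j < j0} = {1..<j0}" using j0 by auto
  finally show ?thesis .
qed

lemma sum_shifted_smooth_step_deriv_has_integral:
  assumes "m \<ge> 1" "k \<ge> 1" "G \<subseteq> {1..k}"
  shows "((\<lambda>t. \<Sum>j\<in>G. A j * smooth_step_deriv m (real k * t - real (j - 1)))
           has_integral (\<Sum>j\<in>G. A j) / real k) {0..1}"
proof -
  define H where "H t = (\<Sum>j\<in>G. A j * smooth_step m (real k * t - real (j - 1)) / real k)" for t
  have "((\<lambda>t. \<Sum>j\<in>G. A j * smooth_step_deriv m (real k * t - real (j - 1))) has_integral H 1 - H 0) {0..1}"
  proof (rule fundamental_theorem_of_calculus)
    fix t :: real
    have "(H has_real_derivative
        (\<Sum>j\<in>G. A j * (real k * smooth_step_deriv m (real k * t - real (j - 1))) / real k))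
        (at t within {0..1})"
      unfolding H_def
      by (intro DERIV_sum DERIV_cdivide DERIV_cmult shifted_smooth_step_has_derivative assms(1))
    thus "(H has_vector_derivative (\<Sum>j\<in>G. A j * smooth_step_deriv m (real k * t - real (j - 1))))
        (at t within {0..1})"
      using assms(2) by (simp add: has_real_derivative_iff_has_vector_derivative)
  qed simp
  moreover have "H 1 = (\<Sum>j\<in>G. A j) / real k"
    unfolding H_def sum_divide_distrib using assms
    by (intro sum.cong refl) (auto simp: smooth_step_ge_1 of_nat_diff)
  moreover have "H 0 = 0" unfolding H_def using smooth_step_nonpos by simp
  ultimately show ?thesis by simp
qed

lemma div_root_le_root_power:
  fixes x a :: real
  assumes "0 \<le> x" "x \<le> a" "n > 0"
  shows "x / a powr (1 / real n) \<le> (x ^ (n - 1)) powr (1 / real n)"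
proof (cases "x = 0")
  case False
  hence xp: "x > 0" using assms by simp
  have "x = x powr (real (n - 1) / real n) * x powr (1 / real n)"
    using xp assms(3) by (simp add: powr_add[symmetric] of_nat_diff add_divide_distrib[symmetric])
  also have "\<dots> \<le> x powr (real (n - 1) / real n) * a powr (1 / real n)"
    using assms xp by (intro mult_left_mono powr_mono2) auto
  finally have "x / a powr (1 / real n) \<le> x powr (real (n - 1) / real n)"
    using xp assms(2) by (simp add: divide_le_eq)
  also have "x powr (real (n - 1) / real n) = (x ^ (n - 1)) powr (1 / real n)"
    using xp by (simp add: powr_realpow[symmetric] powr_powr)
  finally show ?thesis .
qed simp

text \<open>On the \<open>j\<close>-th time interval only the \<open>j\<close>-th step moves, so the product of the derivative
  coordinates is \<open>\<psi>'\<^sup>d\<^sup>-\<^sup>1 \<Prod>\<^sub>i k W\<^sub>j\<^sub>,\<^sub>i\<close>; since \<open>\<psi>' \<le> smooth_step_slope m\<close>, its \<open>d\<close>-th root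
  is at least \<open>\<psi>' / smooth_step_slope m\<^sup>1\<^sup>/\<^sup>d\<close> times that of \<open>\<Prod>\<^sub>i k W\<^sub>j\<^sub>,\<^sub>i\<close>.\<close>

lemma Jfun_integrand_step_curve_ge:
  fixes f :: "(real^'m::finite) \<times> real \<Rightarrow> real" and W :: "nat \<Rightarrow> (real^'m) \<times> real"
  defines "e \<equiv> 1 / real (dim_of TYPE('m))"
  assumes m1: "m \<ge> 1" and t: "t \<in> {0..1}" and f0: "\<And>x. 0 \<le> f x"
    and Wn: "\<And>j i. 0 \<le> fst (W j) $ i" and Ws: "\<And>j. snd (W j) = 0" and G: "G \<subseteq> {1..k}"
    and fc: "\<And>j t. j \<in> G \<Longrightarrow> 0 < real k * t - real (j - 1) \<Longrightarrow> real k * t - real (j - 1) < 1 \<Longrightarrow>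
               f (step_curve m k W t) = c j"
    and c0: "\<And>j. 0 \<le> c j"
  shows "(\<Sum>j\<in>G. (c j * (\<Prod>i\<in>UNIV. real k * fst (W j) $ i)) powr e / smooth_step_slope m powr e
            * smooth_step_deriv m (real k * t - real (j - 1)))
         \<le> Jfun_integrand f (step_curve m k W) t"
    (is "?h \<le> _")
proof (cases "\<exists>j0\<in>G. 0 < real k * t - real (j0 - 1) \<and> real k * t - real (j0 - 1) < 1")
  case True
  then obtain j0 where j0: "j0 \<in> G" "0 < real k * t - real (j0 - 1)" "real k * t - real (j0 - 1) < 1"
    by blast
  define s where "s = real k * t - real (j0 - 1)"
  define P where "P = (\<Prod>i\<in>UNIV. real k * fst (W j0) $ i)"
  have finG: "finite G" and G1: "\<forall>j\<in>G. j \<ge> 1" and j0k: "j0 \<in> {1..k}"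
    using G j0 finite_subset by auto
  have cd: "curve_deriv (step_curve m k W) t = step_curve_deriv m k W t"
    by (rule curve_deriv_step_curve[OF m1 t])
  have "fst (curve_deriv (step_curve m k W) t) $ i = smooth_step_deriv m s * (real k * fst (W j0) $ i)"
    for i
  proof -
    have "fst (curve_deriv (step_curve m k W) t) $ i
        = (\<Sum>j\<in>{1..k}. (real k * fst (W j) $ i) * smooth_step_deriv m (real k * t - real (j - 1)))"
      unfolding cd fst_step_curve_deriv by (intro sum.cong) auto
    also have "\<dots> = (real k * fst (W j0) $ i) * smooth_step_deriv m s"
      unfolding s_def by (rule sum_smooth_step_deriv_single[OF j0(2,3) j0k]) auto
    finally show ?thesis by simp
  qed
  moreover have "snd (curve_deriv (step_curve m k W) t) = 1"
    unfolding cd snd_step_curve_deriv using Ws by simp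
  ultimately have prod_deriv: "(\<Prod>i\<in>UNIV. fst (curve_deriv (step_curve m k W) t) $ i)
      * snd (curve_deriv (step_curve m k W) t) = smooth_step_deriv m s ^ CARD('m) * P"
    unfolding P_def by (simp add: prod.distrib)
  have ds: "0 \<le> smooth_step_deriv m s" "smooth_step_deriv m s \<le> smooth_step_slope m"
    using smooth_step_deriv_nonneg[OF m1] smooth_step_deriv_le_slope[OF m1] by auto
  have cP: "0 \<le> c j0 * P" unfolding P_def using Wn c0 by (intro mult_nonneg_nonneg prod_nonneg) auto
  have "?h = (c j0 * P) powr e * (smooth_step_deriv m s / smooth_step_slope m powr e)"
    unfolding s_def P_def by (subst sum_smooth_step_deriv_single[OF j0(2,3) j0(1) finG G1]) simp
  also have "\<dots> \<le> (c j0 * P) powr e * (smooth_step_deriv m s ^ CARD('m)) powr e"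
    using div_root_le_root_power[OF ds, of "dim_of TYPE('m)"]
    by (intro mult_left_mono) (auto simp: e_def dim_of_def)
  also have "\<dots> = Jfun_integrand f (step_curve m k W) t"
    unfolding Jfun_integrand_def prod_deriv e_def[symmetric] fc[OF j0(1) j0(2,3)]
    using ds cP c0 f0 by (simp add: powr_mult ac_simps)
  finally show ?thesis .
next
  case False
  hence "?h = 0"
    using sum_smooth_step_deriv_none[of G k t "\<lambda>j. (c j * (\<Prod>i\<in>UNIV. real k * fst (W j) $ i)) powr e
      / smooth_step_slope m powr e"] by auto
  thus ?thesis by (simp add: Jfun_integrand_def)
qed

lemma Jfun_step_curve_ge:
  fixes f :: "(real^'m::finite) \<times> real \<Rightarrow> real" and W :: "nat \<Rightarrow> (real^'m) \<times> real"
  defines "e \<equiv> 1 / real (dim_of TYPE('m))"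
  assumes m1: "m \<ge> 1" and k1: "k \<ge> 1"
    and fb: "f \<in> borel_measurable borel" and f0: "\<And>x. 0 \<le> f x" and fM: "\<And>x. f x \<le> M"
    and Wn: "\<And>j i. 0 \<le> fst (W j) $ i" and Ws: "\<And>j. snd (W j) = 0" and G: "G \<subseteq> {1..k}"
    and fc: "\<And>j t. j \<in> G \<Longrightarrow> 0 < real k * t - real (j - 1) \<Longrightarrow> real k * t - real (j - 1) < 1 \<Longrightarrow>
               f (step_curve m k W t) = c j"
    and c0: "\<And>j. 0 \<le> c j"
  shows "(\<Sum>j\<in>G. (c j * (\<Prod>i\<in>UNIV. real k * fst (W j) $ i)) powr e) / (real k * smooth_step_slope m powr e)
         \<le> Jfun f (step_curve m k W)"
proof -
  have adm: "admissible (step_curve m k W)"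
    by (rule admissible_step_curve[OF m1]) (use Wn Ws in auto)
  have "((\<lambda>t. \<Sum>j\<in>G. (c j * (\<Prod>i\<in>UNIV. real k * fst (W j) $ i)) powr e / smooth_step_slope m powr e
      * smooth_step_deriv m (real k * t - real (j - 1))) has_integral
      (\<Sum>j\<in>G. (c j * (\<Prod>i\<in>UNIV. real k * fst (W j) $ i)) powr e / smooth_step_slope m powr e) / real k)
      {0..1}"
    by (rule sum_shifted_smooth_step_deriv_has_integral[OF m1 k1 G])
  from has_integral_le[OF this integrable_integral[OF Jfun_integrand_integrable[OF fb f0 fM adm]]
      Jfun_integrand_step_curve_ge[where f=f and c=c, OF m1 _ f0 Wn Ws G fc c0, folded e_def]]
  show ?thesis by (simp add: Jfun_eq_integral sum_divide_distrib mult.commute)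
qed

section \<open>Piecewise constant functions\<close>

definition cube_index :: "nat \<Rightarrow> (real^'m::finite) \<times> real \<Rightarrow> (nat^'m) \<times> nat" where
  "cube_index L x = ((\<chi> i. nat \<lfloor>real L * fst x $ i\<rfloor> + 1), nat \<lfloor>real L * snd x\<rfloor> + 1)"

definition cube_corner :: "nat \<Rightarrow> (nat^'m::finite) \<times> nat \<Rightarrow> (real^'m) \<times> real" where
  "cube_corner L \<alpha> = ((\<chi> i. (real (fst \<alpha> $ i) - 1) / real L), (real (snd \<alpha>) - 1) / real L)"

definition cube_value :: "nat \<Rightarrow> ((real^'m::finite) \<times> real \<Rightarrow> real) \<Rightarrow> (nat^'m) \<times> nat \<Rightarrow> real" where
  "cube_value L f \<alpha> = f (cube_corner L \<alpha>)"

lemma nat_floor_succ_bounds: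
  assumes "0 \<le> y" "y < real L"
  shows "nat \<lfloor>y\<rfloor> + 1 \<le> L" "real (nat \<lfloor>y\<rfloor> + 1) - 1 \<le> y" "y < real (nat \<lfloor>y\<rfloor> + 1)"
proof -
  have "\<lfloor>y\<rfloor> \<ge> 0" using assms by simp
  have "\<lfloor>y\<rfloor> < int L" using assms by (simp add: floor_less_iff)
  hence "nat \<lfloor>y\<rfloor> < L" using nat_less_iff[OF \<open>\<lfloor>y\<rfloor> \<ge> 0\<close>] by simp
  thus "nat \<lfloor>y\<rfloor> + 1 \<le> L" by simp
  have "real (nat \<lfloor>y\<rfloor>) = of_int \<lfloor>y\<rfloor>" using \<open>\<lfloor>y\<rfloor> \<ge> 0\<close> by simp
  thus "real (nat \<lfloor>y\<rfloor> + 1) - 1 \<le> y" "y < real (nat \<lfloor>y\<rfloor> + 1)"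
    by (simp_all add: of_int_floor_le) linarith
qed

lemma mem_unit_cube:
  "x \<in> unit_cube \<longleftrightarrow> (\<forall>i. 0 \<le> fst x $ i \<and> fst x $ i < 1) \<and> 0 \<le> snd x \<and> snd x < 1"
  by (simp add: unit_cube_def)

lemma cube_index_props:
  assumes "L \<ge> 1" "x \<in> unit_cube"
  shows "valid_index L (cube_index L x)" "x \<in> Qcube L (cube_index L x)"
proof -
  have L: "real L \<ge> 1" using assms by simp
  have c: "0 \<le> real L * fst x $ i" "real L * fst x $ i < real L" for i
    using assms(2) L by (auto simp: mem_unit_cube)
  have s: "0 \<le> real L * snd x" "real L * snd x < real L"
    using assms(2) L by (auto simp: mem_unit_cube)
  show "valid_index L (cube_index L x)"
    unfolding valid_index_def cube_index_def
    using nat_floor_succ_bounds(1)[OF c] nat_floor_succ_bounds(1)[OF s] by simp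
  show "x \<in> Qcube L (cube_index L x)"
    unfolding Qcube_def cube_index_def
    using nat_floor_succ_bounds(2,3)[OF c] nat_floor_succ_bounds(2,3)[OF s] assms(2) by simp
qed

lemma cube_index_unique:
  assumes "x \<in> Qcube L \<alpha>"
  shows "\<alpha> = cube_index L x"
proof -
  have u: "x \<in> unit_cube" using assms by (simp add: Qcube_def)
  have key: "nat \<lfloor>y\<rfloor> + 1 = a" if "real a - 1 \<le> y" "y < real a" "0 \<le> y" for a :: nat and y :: real
  proof -
    have "\<lfloor>y\<rfloor> = int a - 1" using that by (simp add: floor_eq_iff)
    moreover have "a \<ge> 1" using that by linarith
    ultimately show ?thesis by simp
  qed
  have "fst \<alpha> $ i = nat \<lfloor>real L * fst x $ i\<rfloor> + 1" for i
    using assms u by (intro key[symmetric]) (auto simp: Qcube_def mem_unit_cube)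
  moreover have "snd \<alpha> = nat \<lfloor>real L * snd x\<rfloor> + 1"
    using assms u by (intro key[symmetric]) (auto simp: Qcube_def mem_unit_cube)
  ultimately show ?thesis unfolding cube_index_def by (simp add: prod_eq_iff vec_eq_iff)
qed

lemma cube_corner_mem_Qcube:
  assumes "L \<ge> 1" "valid_index L \<alpha>"
  shows "cube_corner L \<alpha> \<in> Qcube L \<alpha>"
proof -
  have L: "real L > 0" using assms by simp
  have A: "1 \<le> real (fst \<alpha> $ i)" "real (fst \<alpha> $ i) \<le> real L" for i
    using assms(2) unfolding valid_index_def by auto
  have B: "1 \<le> real (snd \<alpha>)" "real (snd \<alpha>) \<le> real L"
    using assms(2) unfolding valid_index_def by auto
  have A3: "real (fst \<alpha> $ i) < 1 + real L" for i using A(2)[of i] by linarith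
  show ?thesis
    unfolding Qcube_def mem_unit_cube cube_corner_def using L A B A3
    by (auto simp: field_simps)
qed

lemma piecewise_constant_on_Qcube:
  assumes "L \<ge> 1" "piecewise_constant L f" "valid_index L \<alpha>" "x \<in> Qcube L \<alpha>"
  shows "f x = cube_value L f \<alpha>"
proof -
  obtain c where "\<forall>y\<in>Qcube L \<alpha>. f y = c" using assms unfolding piecewise_constant_def by blast
  thus ?thesis using cube_corner_mem_Qcube[OF assms(1,3)] assms(4) by (simp add: cube_value_def)
qed

lemma finite_bounded_nat_vecs: "finite {v :: nat^'m::finite. \<forall>i. v $ i \<le> N}"
proof -
  have "{v :: nat^'m. \<forall>i. v $ i \<le> N} \<subseteq> vec_lambda ` (PiE UNIV (\<lambda>_. {..N}))"
  proof
    fix v :: "nat^'m" assume "v \<in> {v. \<forall>i. v $ i \<le> N}"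
    hence "vec_nth v \<in> PiE UNIV (\<lambda>_. {..N})" by auto
    thus "v \<in> vec_lambda ` (PiE UNIV (\<lambda>_. {..N}))" by (metis image_eqI vec_nth_inverse)
  qed
  thus ?thesis by (rule finite_subset) (intro finite_imageI finite_PiE, auto)
qed

lemma finite_valid_index: "finite {\<alpha> :: (nat^'m::finite) \<times> nat. valid_index L \<alpha>}"
proof -
  have "{\<alpha> :: (nat^'m) \<times> nat. valid_index L \<alpha>} \<subseteq> {v. \<forall>i. v $ i \<le> L} \<times> {..L}"
    by (auto simp: valid_index_def)
  thus ?thesis by (rule finite_subset) (intro finite_cartesian_product finite_bounded_nat_vecs, auto)
qed

lemma borel_measurable_fst_nth[measurable]:
  "(\<lambda>x::(real^'m::finite) \<times> real. fst x $ i) \<in> borel_measurable borel"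
  by (intro borel_measurable_continuous_onI continuous_intros)

lemma borel_measurable_snd_coord[measurable]:
  "(\<lambda>x::(real^'m::finite) \<times> real. snd x) \<in> borel_measurable borel"
  by (intro borel_measurable_continuous_onI continuous_intros)

lemma unit_cube_in_borel: "unit_cube \<in> sets (borel :: ((real^'m::finite) \<times> real) measure)"
proof -
  have "unit_cube = {x::(real^'m) \<times> real. (\<forall>i. 0 \<le> fst x $ i \<and> fst x $ i < 1) \<and> 0 \<le> snd x \<and> snd x < 1}"
    by (simp add: unit_cube_def)
  also have "\<dots> \<in> sets borel" by measurable
  finally show ?thesis .
qed

lemma Qcube_in_borel: "Qcube L \<alpha> \<in> sets (borel :: ((real^'m::finite) \<times> real) measure)"
proof -
  have "Qcube L \<alpha> = unit_cube \<inter> {x::(real^'m) \<times> real.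
     (\<forall>i. real (fst \<alpha> $ i) - 1 \<le> real L * fst x $ i \<and> real L * fst x $ i < real (fst \<alpha> $ i)) \<and>
     real (snd \<alpha>) - 1 \<le> real L * snd x \<and> real L * snd x < real (snd \<alpha>)}"
    by (auto simp: Qcube_def)
  also have "\<dots> \<in> sets borel" using unit_cube_in_borel by measurable
  finally show ?thesis .
qed

lemma piecewise_constant_eq_sum_indicator:
  fixes f :: "(real^'m::finite) \<times> real \<Rightarrow> real"
  assumes "L \<ge> 1" "piecewise_constant L f" "\<forall>x. x \<notin> unit_cube \<longrightarrow> f x = 0"
  shows "f x = (\<Sum>\<alpha>\<in>{\<alpha>. valid_index L \<alpha>}. cube_value L f \<alpha> * indicator (Qcube L \<alpha>) x)"
proof (cases "x \<in> unit_cube")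
  case True
  have "(\<Sum>\<alpha>\<in>{\<alpha>. valid_index L \<alpha>}. cube_value L f \<alpha> * indicator (Qcube L \<alpha>) x)
      = (\<Sum>\<alpha>\<in>{\<alpha>. valid_index L \<alpha>}. if \<alpha> = cube_index L x then cube_value L f \<alpha> else 0)"
  proof (intro sum.cong refl)
    fix \<alpha> :: "(nat^'m) \<times> nat" assume "\<alpha> \<in> {\<alpha>. valid_index L \<alpha>}"
    show "cube_value L f \<alpha> * indicator (Qcube L \<alpha>) x
        = (if \<alpha> = cube_index L x then cube_value L f \<alpha> else 0)"
    proof (cases "\<alpha> = cube_index L x")
      case True thus ?thesis using cube_index_props[OF assms(1) \<open>x \<in> unit_cube\<close>] by simp
    next
      case False
      hence "x \<notin> Qcube L \<alpha>" using cube_index_unique[of x L \<alpha>] by auto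
      thus ?thesis using False by simp
    qed
  qed
  also have "\<dots> = cube_value L f (cube_index L x)"
    using cube_index_props[OF assms(1) True] finite_valid_index by (subst sum.delta) auto
  also have "\<dots> = f x"
    using piecewise_constant_on_Qcube[OF assms(1,2)] cube_index_props[OF assms(1) True] by simp
  finally show ?thesis by simp
next
  case False
  hence "x \<notin> Qcube L \<alpha>" for \<alpha> by (auto simp: Qcube_def)
  moreover have "f x = 0" using assms(3) False by blast
  ultimately show ?thesis by simp
qed

lemma piecewise_constant_borel_measurable:
  assumes "L \<ge> 1" "piecewise_constant L f" "\<forall>x. x \<notin> unit_cube \<longrightarrow> f x = 0"
  shows "f \<in> borel_measurable borel"
proof -
  have "(\<lambda>x. \<Sum>\<alpha>\<in>{\<alpha>. valid_index L \<alpha>}. cube_value L f \<alpha> * indicator (Qcube L \<alpha>) x) \<in> borel_measurable borel"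
    using Qcube_in_borel by measurable
  moreover have "f = (\<lambda>x. \<Sum>\<alpha>\<in>{\<alpha>. valid_index L \<alpha>}. cube_value L f \<alpha> * indicator (Qcube L \<alpha>) x)"
    using piecewise_constant_eq_sum_indicator[OF assms] by (intro ext)
  ultimately show ?thesis by simp
qed

lemma cube_value_nonneg:
  assumes "L \<ge> 1" "valid_index L \<alpha>" "\<forall>x\<in>unit_cube. 0 \<le> f x"
  shows "cube_value L f \<alpha> \<ge> 0"
  using cube_corner_mem_Qcube[OF assms(1,2)] assms(3) by (auto simp: cube_value_def Qcube_def)

lemma piecewise_constant_bounded:
  assumes "L \<ge> 1" "piecewise_constant L f" "\<forall>x. x \<notin> unit_cube \<longrightarrow> f x = 0"
    "\<forall>x\<in>unit_cube. 0 \<le> f x"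
  obtains M where "\<And>x. 0 \<le> f x" "\<And>x. f x \<le> M"
proof (rule that)
  show "0 \<le> f x" for x using assms(3,4) by (metis order_refl)
  show "f x \<le> (\<Sum>\<alpha>\<in>{\<alpha>. valid_index L \<alpha>}. cube_value L f \<alpha>)" for x
    unfolding piecewise_constant_eq_sum_indicator[OF assms(1-3), of x]
    using cube_value_nonneg[OF assms(1) _ assms(4)] finite_valid_index
    by (intro sum_mono) (auto simp: indicator_def)
qed

lemma open_unit_cube_in_borel: "open_unit_cube \<in> sets (borel :: ((real^'m::finite) \<times> real) measure)"
proof -
  have "open_unit_cube = {x::(real^'m) \<times> real. (\<forall>i. 0 < fst x $ i \<and> fst x $ i < 1) \<and> 0 < snd x \<and> snd x < 1}"
    by (simp add: open_unit_cube_def)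
  also have "\<dots> \<in> sets borel" by measurable
  finally show ?thesis .
qed

lemma cell_bounds_near_center:
  fixes y :: real
  assumes L: "L \<ge> 1" and a: "1 \<le> a" "a \<le> L"
    and near: "\<bar>y - (real a - 1/2) / real L\<bar> < 1 / (2 * real L)"
  shows "real a - 1 < real L * y" "real L * y < real a" "0 < y" "y < 1"
proof -
  have Lp: "real L > 0" using L by simp
  have "real L * y - (real a - 1/2) = real L * (y - (real a - 1/2) / real L)"
    using Lp by (simp add: field_simps)
  hence "\<bar>real L * y - (real a - 1/2)\<bar> = real L * \<bar>y - (real a - 1/2) / real L\<bar>"
    using Lp by (simp add: abs_mult)
  also have "\<dots> < 1/2" using mult_strict_left_mono[OF near Lp] Lp by simp
  finally show lo: "real a - 1 < real L * y" and hi: "real L * y < real a" by linarith+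
  have "real a \<ge> 1" using a by simp
  hence "real L * y > 0" using lo by linarith
  thus "0 < y" using Lp by (simp add: zero_less_mult_iff)
  show "y < 1" using hi a Lp by (smt (verit) mult_less_cancel_left2 of_nat_le_iff)
qed

lemma le_esssup_restrict_lborel:
  fixes F :: "'a::euclidean_space \<Rightarrow> ereal"
  assumes S: "S \<in> sets borel" and sub: "ball p r \<subseteq> S" and r: "r > 0"
    and ge: "\<And>x. x \<in> ball p r \<Longrightarrow> c \<le> F x"
  shows "c \<le> esssup (restrict_space lborel S) F"
proof (rule ccontr)
  assume "\<not> c \<le> esssup (restrict_space lborel S) F"
  hence "AE x in restrict_space lborel S. F x < c"
    using esssup_AE[of F "restrict_space lborel S"] by (auto elim: eventually_mono)
  hence "AE x in lborel. x \<in> S \<longrightarrow> F x < c"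
    using S by (subst (asm) AE_restrict_space_iff) auto
  hence "AE x in lborel. x \<notin> ball p r"
    by (elim eventually_mono) (use sub ge in \<open>force\<close>)
  hence "emeasure lborel (ball p r) = 0"
    by (subst (asm) AE_iff_measurable[where N="ball p r"]) auto
  moreover have "measure lborel (ball p r) > 0" using r by (intro content_ball_pos)
  ultimately show False by (simp add: measure_def)
qed

definition cube_center :: "nat \<Rightarrow> (nat^'m::finite) \<times> nat \<Rightarrow> (real^'m) \<times> real" where
  "cube_center L \<alpha> = ((\<chi> i. (real (fst \<alpha> $ i) - 1/2) / real L), (real (snd \<alpha>) - 1/2) / real L)"

lemma ball_cube_center_subset:
  fixes \<alpha> :: "(nat^'m::finite) \<times> nat"
  assumes L: "L \<ge> 1" and v: "valid_index L \<alpha>"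
  shows "ball (cube_center L \<alpha>) (1 / (2 * real L)) \<subseteq> Qcube L \<alpha> \<inter> open_unit_cube"
proof
  fix x assume "x \<in> ball (cube_center L \<alpha>) (1 / (2 * real L))"
  hence d: "norm (x - cube_center L \<alpha>) < 1 / (2 * real L)" by (simp add: dist_norm norm_minus_commute)
  have "\<bar>fst x $ i - fst (cube_center L \<alpha>) $ i\<bar> < 1 / (2 * real L)" for i
  proof -
    have "\<bar>fst x $ i - fst (cube_center L \<alpha>) $ i\<bar> \<le> norm (fst (x - cube_center L \<alpha>))"
      using component_le_norm_cart[of "fst (x - cube_center L \<alpha>)" i] by simp
    also have "\<dots> \<le> norm (x - cube_center L \<alpha>)" by (metis norm_fst_le prod.collapse)
    finally show ?thesis using d by linarith
  qed
  hence "real (fst \<alpha> $ i) - 1 < real L * fst x $ i \<and> real L * fst x $ i < real (fst \<alpha> $ i)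
      \<and> 0 < fst x $ i \<and> fst x $ i < 1" for i
    using cell_bounds_near_center[OF L, of "fst \<alpha> $ i" "fst x $ i"] v
    by (auto simp: valid_index_def cube_center_def)
  moreover have "\<bar>snd x - snd (cube_center L \<alpha>)\<bar> < 1 / (2 * real L)"
  proof -
    have "\<bar>snd x - snd (cube_center L \<alpha>)\<bar> = norm (snd (x - cube_center L \<alpha>))" by simp
    also have "\<dots> \<le> norm (x - cube_center L \<alpha>)" by (metis norm_snd_le prod.collapse)
    finally show ?thesis using d by linarith
  qed
  hence "real (snd \<alpha>) - 1 < real L * snd x \<and> real L * snd x < real (snd \<alpha>) \<and> 0 < snd x \<and> snd x < 1"
    using cell_bounds_near_center[OF L, of "snd \<alpha>" "snd x"] v
    by (auto simp: valid_index_def cube_center_def)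
  ultimately show "x \<in> Qcube L \<alpha> \<inter> open_unit_cube"
    by (auto simp: Qcube_def unit_cube_def open_unit_cube_def less_imp_le)
qed

lemma cube_value_le_Linf_norm:
  fixes f :: "(real^'m::finite) \<times> real \<Rightarrow> real"
  assumes L: "L \<ge> 1" and pc: "piecewise_constant L f" and fz: "\<forall>x. x \<notin> unit_cube \<longrightarrow> f x = 0"
    and f0: "\<forall>x\<in>unit_cube. 0 \<le> f x" and v: "valid_index L \<alpha>"
  shows "cube_value L f \<alpha> \<le> real_of_ereal (Linf_norm f)"
proof -
  define N where "N = restrict_space (lborel :: ((real^'m) \<times> real) measure) open_unit_cube"
  define F where "F x = ereal \<bar>f x\<bar>" for x
  have "ereal (cube_value L f \<alpha>) \<le> esssup N F"
    unfolding N_def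
  proof (rule le_esssup_restrict_lborel[OF open_unit_cube_in_borel])
    show "ball (cube_center L \<alpha>) (1 / (2 * real L)) \<subseteq> open_unit_cube"
      using ball_cube_center_subset[OF L v] by blast
    show "ereal (cube_value L f \<alpha>) \<le> F x" if "x \<in> ball (cube_center L \<alpha>) (1 / (2 * real L))" for x
      using that ball_cube_center_subset[OF L v] piecewise_constant_on_Qcube[OF L pc v, of x]
      by (auto simp: F_def)
  qed (use L in simp)
  moreover obtain M where f0M: "\<And>x. 0 \<le> f x" "\<And>x. f x \<le> M"
    using piecewise_constant_bounded[OF L pc fz f0] by blast
  have "F \<in> borel_measurable N"
    unfolding N_def F_def using piecewise_constant_borel_measurable[OF L pc fz]
    by (intro measurable_restrict_space1) measurable
  hence "esssup N F \<le> ereal M"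
    by (rule esssup_I) (use f0M in \<open>simp add: F_def\<close>)
  ultimately show ?thesis
    by (cases "esssup N F") (auto simp: Linf_norm_def N_def F_def[abs_def])
qed

section \<open>The boxes \<open>R\<^sub>j\<close>\<close>

text \<open>Extending \<open>b\<close> by \<open>b\<^sub>0 = 0\<close> matches \<open>z\<^sub>0 = 0\<close>; then \<open>z\<^sub>j - z\<^sub>j\<^sub>-\<^sub>1\<close> has first coordinates
  \<open>bincr b j i \<cdot> \<Delta>y\<close>.\<close>

definition bseq :: "(nat \<Rightarrow> nat^'m::finite) \<Rightarrow> nat \<Rightarrow> nat^'m" where
  "bseq b j = (if j = 0 then 0 else b j)"

definition bincr :: "(nat \<Rightarrow> nat^'m::finite) \<Rightarrow> nat \<Rightarrow> 'm \<Rightarrow> real" where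
  "bincr b j i = real (bseq b j $ i) - real (bseq b (j - 1) $ i)"

lemma fst_zpt: "fst (zpt k1 k2 b j) $ i = real (bseq b j $ i) * (1 / real k1 / real k2)"
  by (simp add: zpt_def bseq_def)

lemma snd_zpt: "snd (zpt k1 k2 b j) = real j * (1 / real k1)"
  by (simp add: zpt_def)

lemma bseq_mono:
  assumes "b \<in> Phi k1 k2" "1 \<le> j" "j \<le> k1"
  shows "bseq b (j - 1) $ i \<le> bseq b j $ i"
proof (cases "j = 1")
  case False
  hence "j - 1 \<in> {1..k1}" "j \<in> {1..k1}" using assms by auto
  moreover have "\<forall>j\<in>{1..k1}. \<forall>j'\<in>{1..k1}. j \<le> j' \<longrightarrow> (\<forall>i. b j $ i \<le> b j' $ i)"
    using assms(1) by (simp add: Phi_def)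
  ultimately have "b (j - 1) $ i \<le> b j $ i" by (meson diff_le_self)
  thus ?thesis using False assms by (simp add: bseq_def)
qed (simp add: bseq_def)

lemma bseq_le: "b \<in> Phi k1 k2 \<Longrightarrow> j \<le> k1 \<Longrightarrow> bseq b j $ i \<le> k1 * k2"
  unfolding Phi_def bseq_def by (cases "j = 0") auto

lemma bincr_nonneg: "b \<in> Phi k1 k2 \<Longrightarrow> j \<in> {1..k1} \<Longrightarrow> bincr b j i \<ge> 0"
  using bseq_mono[of b k1 k2 j i] by (auto simp: bincr_def)

lemma bincr_le: "b \<in> Phi k1 k2 \<Longrightarrow> j \<in> {1..k1} \<Longrightarrow> bincr b j i \<le> real k1 * real k2"
  using bseq_le[of b k1 k2 j i] by (auto simp: bincr_def simp flip: of_nat_mult)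

lemma Rset_in_borel: "Rset k1 k2 b j \<in> sets (borel :: ((real^'m::finite) \<times> real) measure)"
proof -
  have "Rset k1 k2 b j = unit_cube \<inter> {x::(real^'m) \<times> real.
     (\<forall>i. fst (zpt k1 k2 b (j - 1)) $ i - 1 / real k1 / real k2 \<le> fst x $ i \<and>
          fst x $ i < fst (zpt k1 k2 b j) $ i) \<and>
     snd (zpt k1 k2 b (j - 1)) \<le> snd x \<and> snd x < snd (zpt k1 k2 b j)}"
    by (auto simp: Rset_def)
  also have "\<dots> \<in> sets borel" using unit_cube_in_borel by measurable
  finally show ?thesis .
qed

lemma prod_mult_const:
  "(\<Prod>i\<in>(UNIV::'m::finite set). a i * (s::real)) = s ^ CARD('m) * (\<Prod>i\<in>UNIV. a i)"
  by (simp add: prod.distrib mult.commute)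

lemma pval_le_box_mass:
  fixes f :: "(real^'m::finite) \<times> real \<Rightarrow> real" and b :: "nat \<Rightarrow> nat^'m"
  assumes L: "L \<ge> 1" and pc: "piecewise_constant L f" and f0: "\<forall>x\<in>unit_cube. 0 \<le> f x"
    and k: "k1 \<ge> 1" "k2 \<ge> 1" and b: "b \<in> Phi k1 k2" and j: "j \<in> {1..k1}"
    and v: "valid_index L \<alpha>" and RQ: "Rset k1 k2 b j \<subseteq> Qcube L \<alpha>"
  shows "0 \<le> pval f k1 k2 b j"
    "pval f k1 k2 b j \<le> cube_value L f \<alpha> / real k1 * (1 / (real k1 * real k2)) ^ CARD('m)
       * (\<Prod>i\<in>UNIV. bincr b j i + 1)"
proof -
  define dy where "dy = 1 / real k1 / real k2"
  define c where "c = cube_value L f \<alpha>"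
  have c0: "c \<ge> 0" unfolding c_def by (rule cube_value_nonneg[OF L v f0])
  define R where "R = Rset k1 k2 b j"
  define lo where "lo = ((\<chi> i. real (bseq b (j - 1) $ i) * dy - dy), real (j - 1) * (1 / real k1))"
  define hi where "hi = ((\<chi> i. real (bseq b j $ i) * dy), real j * (1 / real k1))"
  have Rsub: "R \<subseteq> cbox lo hi"
  proof
    fix x assume xR: "x \<in> R"
    obtain u v where x: "x = (u, v)" by (cases x)
    show "x \<in> cbox lo hi"
      using xR unfolding x R_def Rset_def lo_def hi_def fst_zpt snd_zpt dy_def
      by (auto simp: cbox_Pair_iff mem_box_cart less_imp_le)
  qed
  have "R \<in> sets lebesgue"
    unfolding R_def by (rule sets_completionI_sets) (simp add: Rset_in_borel)
  hence Rl: "R \<in> lmeasurable"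
    by (rule bounded_set_imp_lmeasurable[OF bounded_subset[OF bounded_cbox Rsub]])
  have pv: "pval f k1 k2 b j = integral R (\<lambda>_. c)"
    unfolding pval_def R_def[symmetric] c_def
    using piecewise_constant_on_Qcube[OF L pc v] RQ unfolding R_def by (intro integral_cong) auto
  show "0 \<le> pval f k1 k2 b j"
    unfolding pv using c0 by (intro integral_nonneg integrable_on_const[OF Rl]) auto
  have "integral R (\<lambda>_. c) \<le> integral (cbox lo hi) (\<lambda>_. c)"
    using c0 by (intro integral_subset_le[OF Rsub] integrable_on_const[OF Rl] integrable_on_const) auto
  also have "\<dots> = measure lborel (cbox lo hi) * c" by simp
  also have "measure lborel (cbox lo hi) = 1 / real k1 * (\<Prod>i\<in>UNIV. (bincr b j i + 1) * dy)"
  proof -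
    have dy0: "dy > 0" using k by (simp add: dy_def)
    have "real (bseq b (j - 1) $ i) * dy - dy \<le> real (bseq b j $ i) * dy" for i
    proof -
      have "real (bseq b (j - 1) $ i) \<le> real (bseq b j $ i)" using bseq_mono[OF b, of j i] j by simp
      from mult_right_mono[OF this less_imp_le[OF dy0]] dy0 show ?thesis by linarith
    qed
    hence "fst lo \<in> cbox (fst lo) (fst hi)"
      unfolding lo_def hi_def by (simp add: mem_box_cart)
    hence ne1: "cbox (fst lo) (fst hi) \<noteq> {}" by blast
    have "measure lborel (cbox lo hi)
        = measure lborel (cbox (fst lo) (fst hi)) * measure lborel (cbox (snd lo) (snd hi))"
      using content_Pair[of "fst lo" "snd lo" "fst hi" "snd hi"] by simp
    also have "measure lborel (cbox (fst lo) (fst hi)) = (\<Prod>i\<in>UNIV. fst hi $ i - fst lo $ i)"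
      by (rule content_cbox_cart[OF ne1])
    also have "measure lborel (cbox (snd lo) (snd hi)) = 1 / real k1"
    proof -
      have "snd lo \<le> snd hi" unfolding lo_def hi_def by (simp add: divide_right_mono)
      hence "measure lborel (cbox (snd lo) (snd hi)) = snd hi - snd lo" by simp
      also have "\<dots> = 1 / real k1" unfolding lo_def hi_def using j by (simp add: of_nat_diff field_simps)
      finally show ?thesis .
    qed
    finally show ?thesis unfolding lo_def hi_def bincr_def by (simp add: algebra_simps)
  qed
  finally show "pval f k1 k2 b j \<le> cube_value L f \<alpha> / real k1 * (1 / (real k1 * real k2)) ^ CARD('m)
       * (\<Prod>i\<in>UNIV. bincr b j i + 1)"
    unfolding pv c_def prod_mult_const dy_def by (simp add: ac_simps)
qed

lemma powr_subadditive:
  fixes x y e :: real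
  assumes "0 \<le> x" "0 \<le> y" "0 < e" "e \<le> 1"
  shows "(x + y) powr e \<le> x powr e + y powr e"
proof (cases "x + y = 0")
  case False
  hence s: "x + y > 0" using assms by simp
  have weighted: "z * (x + y) powr (e - 1) \<le> z powr e" if "0 \<le> z" "z \<le> x + y" for z
  proof (cases "z = 0")
    case False
    hence "(x + y) powr (e - 1) \<le> z powr (e - 1)" using that assms by (intro powr_mono2') auto
    hence "z * (x + y) powr (e - 1) \<le> z * z powr (e - 1)" using that by (simp add: mult_left_mono)
    also have "\<dots> = z powr e" using False that by (simp add: powr_mult_base)
    finally show ?thesis .
  qed simp
  have "(x + y) powr e = x * (x + y) powr (e - 1) + y * (x + y) powr (e - 1)"
    using s by (simp add: powr_mult_base flip: distrib_right)
  also have "\<dots> \<le> x powr e + y powr e" using assms by (intro add_mono weighted) auto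
  finally show ?thesis .
qed (use assms in simp)

lemma powr_scale_eq:
  fixes x k :: real
  assumes "0 \<le> x" "0 < k"
  shows "(k ^ n * x) powr (1 / real (n + 1)) / k = (x / k) powr (1 / real (n + 1))"
proof -
  have "(x / k) powr (1 / real (n + 1)) = (k ^ n * x / k ^ (n + 1)) powr (1 / real (n + 1))"
    using assms by simp
  also have "\<dots> = (k ^ n * x) powr (1 / real (n + 1)) / (k ^ (n + 1)) powr (1 / real (n + 1))"
    by (rule powr_divide)
  also have "(k ^ (n + 1)) powr (1 / real (n + 1)) = k"
    using assms by (intro power_powr_inverse) auto
  finally show ?thesis by simp
qed

lemma prod_add_one_diff_le:
  fixes x :: "'a \<Rightarrow> real"
  assumes "finite A" "\<And>i. i \<in> A \<Longrightarrow> 0 \<le> x i" "\<And>i. i \<in> A \<Longrightarrow> x i \<le> K"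
  shows "(K + 1) * ((\<Prod>i\<in>A. x i + 1) - (\<Prod>i\<in>A. x i)) \<le> real (card A) * (K + 1) ^ card A"
  using assms
proof (induction A rule: finite_induct)
  case (insert a F)
  define P1 where "P1 = (\<Prod>i\<in>F. x i + 1)"
  define P0 where "P0 = (\<Prod>i\<in>F. x i)"
  have xa: "0 \<le> x a" "x a \<le> K" using insert.prems by auto
  have IH: "(K + 1) * (P1 - P0) \<le> real (card F) * (K + 1) ^ card F"
    using insert unfolding P1_def P0_def by auto
  have "P0 \<le> P1" unfolding P1_def P0_def using insert.prems by (simp add: prod_mono)
  have "P0 \<le> (\<Prod>i\<in>F. K + 1)" unfolding P0_def using insert.prems
    by (intro prod_mono) (auto, smt (verit) insertI2)
  hence P0K: "P0 \<le> (K + 1) ^ card F" by simp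
  have "(K + 1) * ((\<Prod>i\<in>insert a F. x i + 1) - (\<Prod>i\<in>insert a F. x i))
      = (x a + 1) * ((K + 1) * (P1 - P0)) + (K + 1) * P0"
    using insert.hyps by (simp add: P1_def P0_def algebra_simps)
  also have "\<dots> \<le> (K + 1) * (real (card F) * (K + 1) ^ card F) + (K + 1) * (K + 1) ^ card F"
    using xa \<open>P0 \<le> P1\<close> by (intro add_mono[OF mult_mono[OF _ IH] mult_left_mono[OF P0K]]) auto
  also have "\<dots> = real (card (insert a F)) * (K + 1) ^ card (insert a F)"
    using insert.hyps by (simp add: algebra_simps)
  finally show ?case .
qed simp

lemma scaled_prod_add_one_diff_le:
  fixes x :: "'a \<Rightarrow> real"
  assumes "finite A" "\<And>i. i \<in> A \<Longrightarrow> 0 \<le> x i" "\<And>i. i \<in> A \<Longrightarrow> x i \<le> K" "K \<ge> 1"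
  shows "(1 / K) ^ card A * ((\<Prod>i\<in>A. x i + 1) - (\<Prod>i\<in>A. x i)) \<le> real (card A) * 2 ^ card A / K"
proof -
  define n where "n = card A"
  have "(1 / K) ^ n * ((\<Prod>i\<in>A. x i + 1) - (\<Prod>i\<in>A. x i)) \<le> (1 / K) ^ n * (real n * (K + 1) ^ n / (K + 1))"
    using prod_add_one_diff_le[OF assms(1-3)] assms(4)
    by (intro mult_left_mono) (auto simp: n_def le_divide_eq mult.commute)
  also have "\<dots> = real n * ((K + 1) / K) ^ n / (K + 1)"
    by (simp add: power_divide)
  also have "\<dots> \<le> real n * 2 ^ n / K"
  proof (intro frac_le mult_left_mono power_mono)
    show "(K + 1) / K \<le> 2" using assms(4) by (simp add: divide_le_eq)
  qed (use assms(4) in auto)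
  finally show ?thesis unfolding n_def .
qed

lemma error_threshold_arith:
  fixes Lam eps k1 k2 :: real and n :: nat
  assumes L0: "Lam \<ge> 0" and ep: "eps > 0" and k1: "k1 \<ge> 1" and k2: "k2 \<ge> 1"
    and hyp: "4 ^ (n + 1) * real (n + 1) * Lam * k1 ^ n / eps ^ (n + 1) \<le> k2"
  shows "Lam * real n * 2 ^ n / (k1 * (k1 * k2)) \<le> (eps / (2 * k1)) ^ (n + 1)"
proof -
  have k1p: "k1 > 0" using k1 by simp
  have hyp': "4 ^ (n + 1) * real (n + 1) * Lam * k1 ^ n \<le> k2 * eps ^ (n + 1)"
    using hyp ep by (simp add: divide_le_eq)
  have "(4::real) ^ (n + 1) = 2 ^ (2 * (n + 1))" by (simp add: power_mult)
  also have "2 * (n + 1) = n + (n + 1) + 1" by simp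
  finally have "(4::real) ^ (n + 1) = 2 ^ n * 2 ^ (n + 1) * 2" by (simp only: power_add power_one_right)
  hence c1: "real n * (2 ^ n * 2 ^ (n + 1)) \<le> 4 ^ (n + 1) * real (n + 1)" by simp
  have "Lam * real n * 2 ^ n * (2 * k1) ^ (n + 1) = (real n * (2 ^ n * 2 ^ (n + 1))) * (Lam * k1 ^ n) * k1"
    by (simp add: power_mult_distrib ac_simps)
  also have "\<dots> \<le> (4 ^ (n + 1) * real (n + 1)) * (Lam * k1 ^ n) * k1"
    using c1 L0 k1p by (intro mult_right_mono) auto
  also have "\<dots> \<le> (k2 * eps ^ (n + 1)) * k1"
    using hyp' k1p by (intro mult_right_mono) (auto simp: algebra_simps)
  also have "\<dots> \<le> (k2 * eps ^ (n + 1)) * k1 * k1"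
    using mult_left_mono[OF k1, of "k2 * eps ^ (n + 1) * k1"] k1 k2 ep by simp
  finally have "Lam * real n * 2 ^ n * (2 * k1) ^ (n + 1) \<le> eps ^ (n + 1) * (k1 * (k1 * k2))"
    by (simp add: ac_simps)
  thus ?thesis
    using k1p k2 by (simp add: power_divide divide_le_eq le_divide_eq ac_simps)
qed

text \<open>The contribution of the extra layer of width \<open>\<Delta>y\<close> around each box is negligible once \<open>k\<^sub>2\<close>
  is large.\<close>

lemma root_error_term_le:
  fixes N :: "'a \<Rightarrow> real" and c Lam eps :: real
  assumes "finite A" "\<And>i. i \<in> A \<Longrightarrow> 0 \<le> N i" "\<And>i. i \<in> A \<Longrightarrow> N i \<le> real k1 * real k2"
    and "0 \<le> c" "c \<le> Lam" "eps > 0" "k1 \<ge> 1" "k2 \<ge> 1"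
    and hyp: "4 ^ (card A + 1) * real (card A + 1) * Lam * real k1 ^ card A / eps ^ (card A + 1) \<le> real k2"
  shows "(c / real k1 * (1 / (real k1 * real k2)) ^ card A * ((\<Prod>i\<in>A. N i + 1) - (\<Prod>i\<in>A. N i)))
           powr (1 / real (card A + 1)) \<le> eps / (2 * real k1)"
proof -
  define n where "n = card A"
  define K where "K = real k1 * real k2"
  have "1 * 1 \<le> real k1 * real k2" using assms(7,8) by (intro mult_mono) auto
  hence K1: "K \<ge> 1" unfolding K_def by simp
  have df0: "0 \<le> (\<Prod>i\<in>A. N i + 1) - (\<Prod>i\<in>A. N i)" using assms(2) by (simp add: prod_mono)
  have "c / real k1 * (1 / K) ^ n * ((\<Prod>i\<in>A. N i + 1) - (\<Prod>i\<in>A. N i))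
      \<le> Lam / real k1 * (real n * 2 ^ n / K)"
    using scaled_prod_add_one_diff_le[where K=K, OF assms(1,2)] assms(3-5) K1 df0
    unfolding n_def K_def mult.assoc by (intro mult_mono divide_right_mono) auto
  also have "\<dots> \<le> (eps / (2 * real k1)) ^ (n + 1)"
    using error_threshold_arith[of Lam eps "real k1" "real k2" n] assms(4-8) hyp
    by (simp add: K_def n_def mult.assoc)
  finally have "c / real k1 * (1 / K) ^ n * ((\<Prod>i\<in>A. N i + 1) - (\<Prod>i\<in>A. N i))
      \<le> (eps / (2 * real k1)) ^ (n + 1)" .
  hence "(c / real k1 * (1 / K) ^ n * ((\<Prod>i\<in>A. N i + 1) - (\<Prod>i\<in>A. N i))) powr (1 / real (n + 1))
      \<le> ((eps / (2 * real k1)) ^ (n + 1)) powr (1 / real (n + 1))"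
    using assms(4) df0 K1 by (intro powr_mono2) auto
  also have "\<dots> = eps / (2 * real k1)"
    using assms(6,7) by (intro power_powr_inverse) auto
  finally show ?thesis unfolding n_def K_def .
qed

section \<open>A staircase curve through the boxes\<close>

definition staircase_increments ::
    "nat \<Rightarrow> nat \<Rightarrow> (nat \<Rightarrow> nat^'m::finite) \<Rightarrow> nat \<Rightarrow> (real^'m) \<times> real" where
  "staircase_increments k1 k2 b j =
     (if j \<in> {1..k1} then ((\<chi> i. bincr b j i / (real k1 * real k2)), 0) else 0)"

lemma sum_bincr_telescope: "(\<Sum>j\<in>{1..<Suc p}. bincr b j i) = real (bseq b p $ i)"
  by (induction p) (auto simp: atLeastLessThanSuc bincr_def bseq_def)

lemma fst_step_curve_staircase:
  fixes b :: "nat \<Rightarrow> nat^'m::finite"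
  assumes m1: "m \<ge> 1" and j0: "j0 \<in> {1..k1}"
    and s: "0 < real k1 * t - real (j0 - 1)" "real k1 * t - real (j0 - 1) < 1"
  shows "fst (step_curve m k1 (staircase_increments k1 k2 b) t) $ i
       = (real (bseq b (j0 - 1) $ i) + smooth_step m (real k1 * t - real (j0 - 1)) * bincr b j0 i)
         / (real k1 * real k2)"
proof -
  have "fst (step_curve m k1 (staircase_increments k1 k2 b) t) $ i
      = (\<Sum>j\<in>{1..k1}. smooth_step m (real k1 * t - real (j - 1)) * (bincr b j i / (real k1 * real k2)))"
    unfolding fst_step_curve by (intro sum.cong) (auto simp: staircase_increments_def)
  also have "\<dots> = (\<Sum>j\<in>{1..<j0}. bincr b j i / (real k1 * real k2))
      + smooth_step m (real k1 * t - real (j0 - 1)) * (bincr b j0 i / (real k1 * real k2))"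
    by (rule sum_smooth_step_split[OF m1 j0 s])
  also have "(\<Sum>j\<in>{1..<j0}. bincr b j i) = real (bseq b (j0 - 1) $ i)"
  proof -
    have "Suc (j0 - 1) = j0" using j0 by simp
    thus ?thesis using sum_bincr_telescope[where p="j0 - 1" and b=b and i=i] by simp
  qed
  ultimately show ?thesis by (simp add: sum_divide_distrib[symmetric] add_divide_distrib)
qed

lemma step_curve_staircase_mem_Rset:
  fixes b :: "nat \<Rightarrow> nat^'m::finite"
  assumes m1: "m \<ge> 1" and k: "k1 \<ge> 1" "k2 \<ge> 1" and b: "b \<in> Phi k1 k2" and j0: "j0 \<in> {1..k1}"
    and pos: "\<And>i. bincr b j0 i > 0"
    and s: "0 < real k1 * t - real (j0 - 1)" "real k1 * t - real (j0 - 1) < 1"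
  shows "step_curve m k1 (staircase_increments k1 k2 b) t \<in> Rset k1 k2 b j0"
proof -
  define x where "x = step_curve m k1 (staircase_increments k1 k2 b) t"
  define dy where "dy = 1 / real k1 / real k2"
  define ps where "ps = smooth_step m (real k1 * t - real (j0 - 1))"
  have ps: "0 < ps" "ps < 1" unfolding ps_def using smooth_step_strict_bounds[OF m1 s] by auto
  have dy0: "dy > 0" using k by (simp add: dy_def)
  have fst_x: "fst x $ i = (real (bseq b (j0 - 1) $ i) + ps * bincr b j0 i) * dy" for i
    unfolding x_def fst_step_curve_staircase[OF m1 j0 s] ps_def dy_def by (simp add: field_simps)
  have lo: "real (bseq b (j0 - 1) $ i) * dy < fst x $ i" for i
    unfolding fst_x using ps pos dy0 by (simp add: distrib_right)
  have hi: "fst x $ i < real (bseq b j0 $ i) * dy" for i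
  proof -
    have "ps * bincr b j0 i < bincr b j0 i" using ps pos[of i] by simp
    hence "real (bseq b (j0 - 1) $ i) + ps * bincr b j0 i < real (bseq b j0 $ i)"
      by (simp add: bincr_def)
    thus ?thesis unfolding fst_x using dy0 by (simp add: mult_strict_right_mono)
  qed
  have hi1: "real (bseq b j0 $ i) * dy \<le> 1" for i
  proof -
    have "real (bseq b j0 $ i) \<le> real k1 * real k2"
      using bseq_le[OF b, of j0 i] j0 by (simp flip: of_nat_mult)
    thus ?thesis using k by (simp add: dy_def field_simps)
  qed
  have snd_x: "snd x = t" by (simp add: x_def snd_step_curve staircase_increments_def)
  have kp: "real k1 > 0" using k by simp
  have tj: "real (j0 - 1) / real k1 \<le> t" "t < real j0 / real k1"
    using s j0 kp by (auto simp: field_simps of_nat_diff)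
  moreover have "0 < t"
  proof -
    have "real k1 * t > 0" using s(1) of_nat_0_le_iff[of "j0 - 1"] by linarith
    thus ?thesis using kp by (simp add: zero_less_mult_iff)
  qed
  moreover have "t < 1"
  proof -
    have "real j0 / real k1 \<le> 1" using j0 kp by simp
    thus ?thesis using tj(2) by linarith
  qed
  moreover have "0 \<le> fst x $ i \<and> fst x $ i < 1" for i
    using lo[of i] hi[of i] hi1[of i] dy0 by (smt (verit) of_nat_0_le_iff zero_le_mult_iff)
  ultimately have "x \<in> unit_cube" unfolding unit_cube_def using snd_x by auto
  moreover have "fst (zpt k1 k2 b (j0 - 1)) $ i - 1 / real k1 / real k2 \<le> fst x $ i"
    "fst x $ i < fst (zpt k1 k2 b j0) $ i" for i
    using lo[of i] hi[of i] dy0 unfolding fst_zpt dy_def[symmetric] by linarith+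
  moreover have "snd (zpt k1 k2 b (j0 - 1)) \<le> snd x" "snd x < snd (zpt k1 k2 b j0)"
    unfolding snd_zpt snd_x using tj by simp_all
  ultimately show ?thesis unfolding x_def[symmetric] Rset_def by blast
qed

lemma root_pval_le_main_plus_error:
  fixes f :: "(real^'m::finite) \<times> real \<Rightarrow> real" and b :: "nat \<Rightarrow> nat^'m"
    and k1 k2 L :: nat and \<alpha> :: "(nat^'m) \<times> nat"
  defines "e \<equiv> 1 / real (dim_of TYPE('m))" and "dy \<equiv> 1 / (real k1 * real k2)"
    and "c \<equiv> cube_value L f \<alpha>"
  assumes L: "L \<ge> 1" and pc: "piecewise_constant L f" and f0: "\<forall>x\<in>unit_cube. 0 \<le> f x"
    and k: "k1 \<ge> 1" "k2 \<ge> 1" and b: "b \<in> Phi k1 k2" and j: "j \<in> {1..k1}"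
    and v: "valid_index L \<alpha>" and RQ: "Rset k1 k2 b j \<subseteq> Qcube L \<alpha>"
  shows "pval f k1 k2 b j powr e
      \<le> (c / real k1 * dy ^ CARD('m) * (\<Prod>i\<in>UNIV. bincr b j i)) powr e
       + (c / real k1 * dy ^ CARD('m) * ((\<Prod>i\<in>UNIV. bincr b j i + 1) - (\<Prod>i\<in>UNIV. bincr b j i))) powr e"
proof -
  define u where "u = c / real k1 * dy ^ CARD('m) * (\<Prod>i\<in>UNIV. bincr b j i)"
  define v where "v = c / real k1 * dy ^ CARD('m) * ((\<Prod>i\<in>UNIV. bincr b j i + 1) - (\<Prod>i\<in>UNIV. bincr b j i))"
  have c0: "0 \<le> c / real k1 * dy ^ CARD('m)"
    using cube_value_nonneg[OF L v f0] by (simp add: c_def dy_def)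
  have "0 \<le> (\<Prod>i\<in>UNIV. bincr b j i)" "(\<Prod>i\<in>UNIV. bincr b j i) \<le> (\<Prod>i\<in>UNIV. bincr b j i + 1)"
    using bincr_nonneg[OF b j] by (auto intro: prod_nonneg prod_mono)
  hence uv: "0 \<le> u" "0 \<le> v" unfolding u_def v_def using mult_nonneg_nonneg[OF c0] by simp_all
  have "u + v = c / real k1 * dy ^ CARD('m) * (\<Prod>i\<in>UNIV. bincr b j i + 1)"
    by (simp add: u_def v_def algebra_simps)
  hence "pval f k1 k2 b j powr e \<le> (u + v) powr e"
    using pval_le_box_mass[OF L pc f0 k b j v RQ] by (intro powr_mono2) (auto simp: e_def c_def dy_def)
  also have "\<dots> \<le> u powr e + v powr e"
    using uv by (intro powr_subadditive) (auto simp: e_def dim_of_def)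
  finally show ?thesis unfolding u_def v_def .
qed

lemma sum_root_main_terms_le_Jbar:
  fixes f :: "(real^'m::finite) \<times> real \<Rightarrow> real" and b :: "nat \<Rightarrow> nat^'m" and k1 k2 :: nat
  defines "e \<equiv> 1 / real (dim_of TYPE('m))" and "dy \<equiv> 1 / (real k1 * real k2)"
  assumes m1: "m \<ge> 1" and k: "k1 \<ge> 1" "k2 \<ge> 1" and b: "b \<in> Phi k1 k2"
    and fb: "f \<in> borel_measurable borel" and f0: "\<And>x. 0 \<le> f x" and fM: "\<And>x. f x \<le> M"
    and fz: "\<And>x. x \<notin> unit_cube \<Longrightarrow> f x = 0"
    and G: "G \<subseteq> {1..k1}" and pos: "\<And>j i. j \<in> G \<Longrightarrow> bincr b j i > 0"
    and fR: "\<And>j x. j \<in> G \<Longrightarrow> x \<in> Rset k1 k2 b j \<Longrightarrow> f x = c j" and c0: "\<And>j. 0 \<le> c j"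
  shows "(\<Sum>j\<in>G. (c j / real k1 * dy ^ CARD('m) * (\<Prod>i\<in>UNIV. bincr b j i)) powr e)
         \<le> smooth_step_slope m powr e * Jbar f"
proof -
  define W where "W = staircase_increments k1 k2 b"
  have Wn: "0 \<le> fst (W j) $ i" and Ws: "snd (W j) = 0" for j i
    using bincr_nonneg[OF b] by (auto simp: W_def staircase_increments_def)
  have "f (step_curve m k1 W t) = c j"
    if "j \<in> G" "0 < real k1 * t - real (j - 1)" "real k1 * t - real (j - 1) < 1" for j t
    using step_curve_staircase_mem_Rset[OF m1 k b _ pos] G that unfolding W_def by (intro fR) auto
  from Jfun_step_curve_ge[where c=c, OF m1 k(1) fb f0 fM Wn Ws G this c0, folded e_def]
  have lower: "(\<Sum>j\<in>G. (c j * (\<Prod>i\<in>UNIV. real k1 * fst (W j) $ i)) powr e)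
      / (real k1 * smooth_step_slope m powr e) \<le> Jfun f (step_curve m k1 W)" .
  have "smooth_step_slope m powr e > 0" using smooth_step_slope_ge_1[OF m1] by simp
  hence "(\<Sum>j\<in>G. (c j * (\<Prod>i\<in>UNIV. real k1 * fst (W j) $ i)) powr e) / real k1
      = (\<Sum>j\<in>G. (c j * (\<Prod>i\<in>UNIV. real k1 * fst (W j) $ i)) powr e)
        / (real k1 * smooth_step_slope m powr e) * smooth_step_slope m powr e"
    by simp
  also have "\<dots> \<le> Jfun f (step_curve m k1 W) * smooth_step_slope m powr e"
    using lower by (intro mult_right_mono) auto
  also have "\<dots> = smooth_step_slope m powr e * Jfun f (step_curve m k1 W)" by simp
  also have "\<dots> \<le> smooth_step_slope m powr e * Jbar f"
    using Jfun_le_Jbar[OF f0 fM fz admissible_step_curve[OF m1 Wn]] Ws by (intro mult_left_mono) auto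
  also have "(\<Sum>j\<in>G. (c j * (\<Prod>i\<in>UNIV. real k1 * fst (W j) $ i)) powr e) / real k1
      = (\<Sum>j\<in>G. (c j / real k1 * dy ^ CARD('m) * (\<Prod>i\<in>UNIV. bincr b j i)) powr e)"
    unfolding sum_divide_distrib
  proof (intro sum.cong refl)
    fix j assume "j \<in> G"
    hence scale: "c j * (\<Prod>i\<in>UNIV. real k1 * fst (W j) $ i)
        = real k1 ^ CARD('m) * (c j * dy ^ CARD('m) * (\<Prod>i\<in>UNIV. bincr b j i))"
      using G by (auto simp: W_def staircase_increments_def dy_def prod_mult_const prod_dividef
          power_mult_distrib field_simps)
    have "0 \<le> c j * dy ^ CARD('m) * (\<Prod>i\<in>UNIV. bincr b j i)"
      using c0[of j] bincr_nonneg[OF b] \<open>j \<in> G\<close> G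
      by (intro mult_nonneg_nonneg prod_nonneg) (auto simp: dy_def)
    from powr_scale_eq[OF this, of "real k1" "CARD('m)"] k
    show "(c j * (\<Prod>i\<in>UNIV. real k1 * fst (W j) $ i)) powr e / real k1
        = (c j / real k1 * dy ^ CARD('m) * (\<Prod>i\<in>UNIV. bincr b j i)) powr e"
      unfolding scale e_def by (simp add: dim_of_def)
  qed
  finally show ?thesis .
qed

lemma smooth_step_slope_powr_mult_le:
  assumes "m \<ge> 1" "0 < e" "e \<le> 1" "J \<le> B" "0 \<le> B"
  shows "smooth_step_slope m powr e * J \<le> J + B / (2 * real m)"
proof -
  have s1: "smooth_step_slope m \<ge> 1" by (rule smooth_step_slope_ge_1[OF assms(1)])
  have "1 \<le> smooth_step_slope m powr e" "smooth_step_slope m powr e \<le> smooth_step_slope m"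
    using s1 assms(2,3) powr_mono[of e 1 "smooth_step_slope m"] by (auto simp: ge_one_powr_ge_zero)
  hence "(smooth_step_slope m powr e - 1) * J \<le> (smooth_step_slope m - 1) * B"
  proof -
    have "(smooth_step_slope m powr e - 1) * J \<le> (smooth_step_slope m powr e - 1) * B"
      using \<open>1 \<le> smooth_step_slope m powr e\<close> assms(4) by (intro mult_left_mono) auto
    also have "\<dots> \<le> (smooth_step_slope m - 1) * B"
      using \<open>smooth_step_slope m powr e \<le> smooth_step_slope m\<close> assms(5) by (intro mult_right_mono) auto
    finally show ?thesis .
  qed
  moreover have "smooth_step_slope m - 1 = 1 / (2 * real m)"
    using assms(1) by (simp add: smooth_step_slope_def field_simps)
  ultimately show ?thesis by (simp add: algebra_simps)
qed

lemma sum_root_main_terms_le_Jbar_plus: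
  fixes f :: "(real^'m::finite) \<times> real \<Rightarrow> real" and b :: "nat \<Rightarrow> nat^'m" and k1 k2 :: nat
  defines "e \<equiv> 1 / real (dim_of TYPE('m))" and "dy \<equiv> 1 / (real k1 * real k2)"
  assumes k: "k1 \<ge> 1" "k2 \<ge> 1" and b: "b \<in> Phi k1 k2" and ep: "\<epsilon> > 0"
    and fb: "f \<in> borel_measurable borel" and f0: "\<And>x. 0 \<le> f x" and fM: "\<And>x. f x \<le> M"
    and fz: "\<And>x. x \<notin> unit_cube \<Longrightarrow> f x = 0"
    and H: "H \<subseteq> {1..k1}" and fR: "\<And>j x. j \<in> H \<Longrightarrow> x \<in> Rset k1 k2 b j \<Longrightarrow> f x = c j"
    and c0: "\<And>j. 0 \<le> c j"
  shows "(\<Sum>j\<in>H. (c j / real k1 * dy ^ CARD('m) * (\<Prod>i\<in>UNIV. bincr b j i)) powr e)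
         \<le> Jbar f + \<epsilon> / 2"
proof -
  define G where "G = {j \<in> H. \<forall>i. bincr b j i > 0}"
  define B where "B = M powr e * real (dim_of TYPE('m))"
  define m where "m = nat \<lceil>B / \<epsilon>\<rceil> + 1"
  have m1: "m \<ge> 1" by (simp add: m_def)
  have "B / \<epsilon> \<le> real m" unfolding m_def by linarith
  hence B_m: "B / (2 * real m) \<le> \<epsilon> / 2" using ep m1 by (simp add: field_simps)
  have "(\<Sum>j\<in>H. (c j / real k1 * dy ^ CARD('m) * (\<Prod>i\<in>UNIV. bincr b j i)) powr e)
      = (\<Sum>j\<in>G. (c j / real k1 * dy ^ CARD('m) * (\<Prod>i\<in>UNIV. bincr b j i)) powr e)"
  proof (rule sum.mono_neutral_right)
    show "finite H" using H finite_subset by blast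
    show "\<forall>j\<in>H - G. (c j / real k1 * dy ^ CARD('m) * (\<Prod>i\<in>UNIV. bincr b j i)) powr e = 0"
    proof
      fix j assume "j \<in> H - G"
      then obtain i where "\<not> bincr b j i > 0" and j: "j \<in> {1..k1}" using H by (auto simp: G_def)
      hence "bincr b j i = 0" using bincr_nonneg[OF b j, of i] by linarith
      thus "(c j / real k1 * dy ^ CARD('m) * (\<Prod>i\<in>UNIV. bincr b j i)) powr e = 0"
        by (auto simp: prod_zero_iff)
    qed
  qed (auto simp: G_def)
  also have "\<dots> \<le> smooth_step_slope m powr e * Jbar f"
    unfolding e_def dy_def
    by (rule sum_root_main_terms_le_Jbar[OF m1 k b fb f0 fM fz _ _ fR c0]) (use H in \<open>auto simp: G_def\<close>)
  also have "\<dots> \<le> Jbar f + B / (2 * real m)"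
    using Jbar_le_dim_bound[where f=f and M=M, OF f0 fM fz] f0 fM
    by (intro smooth_step_slope_powr_mult_le m1) (auto simp: e_def B_def dim_of_def intro: order_trans)
  finally show ?thesis using B_m by linarith
qed

lemma sum_root_pval_le_Jbar:
  fixes f :: "(real^'m::finite) \<times> real \<Rightarrow> real" and b :: "nat \<Rightarrow> nat^'m" and k1 k2 :: nat
  defines "e \<equiv> 1 / real (dim_of TYPE('m))" and "n \<equiv> CARD('m)"
    and "Lam \<equiv> real_of_ereal (Linf_norm f)" and "dy \<equiv> 1 / (real k1 * real k2)"
  assumes L: "L \<ge> 1" and f0: "\<forall>x\<in>unit_cube. 0 \<le> f x" and fz: "\<forall>x. x \<notin> unit_cube \<longrightarrow> f x = 0"
    and pc: "piecewise_constant L f" and ep: "\<epsilon> > 0" and k: "k1 \<ge> 1" "k2 \<ge> 1" and b: "b \<in> Phi k1 k2"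
    and hk: "4 ^ (n + 1) * real (n + 1) * Lam * real k1 ^ n / \<epsilon> ^ (n + 1) \<le> real k2"
  shows "(\<Sum>j\<in>Hset L k1 k2 b. pval f k1 k2 b j powr e) \<le> Jbar f + \<epsilon>"
proof -
  define H where "H = Hset L k1 k2 b"
  have H: "H \<subseteq> {1..k1}" by (auto simp: H_def Hset_def)
  obtain \<alpha> where \<alpha>: "\<And>j. j \<in> H \<Longrightarrow> valid_index L (\<alpha> j) \<and> Rset k1 k2 b j \<subseteq> Qcube L (\<alpha> j)"
    using bchoice[of H "\<lambda>j a. valid_index L a \<and> Rset k1 k2 b j \<subseteq> Qcube L a"] by (auto simp: H_def Hset_def)
  define c where "c j = (if j \<in> H then cube_value L f (\<alpha> j) else 0)" for j
  have c0: "0 \<le> c j" for j using cube_value_nonneg[OF L _ f0] \<alpha> by (simp add: c_def)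
  have c_Lam: "c j \<le> Lam" if "j \<in> H" for j
    using cube_value_le_Linf_norm[OF L pc fz f0] \<alpha> that by (simp add: c_def Lam_def)
  obtain M where f0M: "\<And>x. 0 \<le> f x" "\<And>x. f x \<le> M"
    using piecewise_constant_bounded[OF L pc fz f0] by blast
  have "pval f k1 k2 b j powr e
      \<le> (c j / real k1 * dy ^ n * (\<Prod>i\<in>UNIV. bincr b j i)) powr e
       + (c j / real k1 * dy ^ n * ((\<Prod>i\<in>UNIV. bincr b j i + 1) - (\<Prod>i\<in>UNIV. bincr b j i))) powr e"
    if "j \<in> H" for j
    using root_pval_le_main_plus_error[OF L pc f0 k b _ conjunct1[OF \<alpha>] conjunct2[OF \<alpha>]] that H
    by (auto simp: c_def e_def n_def dy_def)
  hence "(\<Sum>j\<in>H. pval f k1 k2 b j powr e)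
      \<le> (\<Sum>j\<in>H. (c j / real k1 * dy ^ n * (\<Prod>i\<in>UNIV. bincr b j i)) powr e)
       + (\<Sum>j\<in>H. (c j / real k1 * dy ^ n * ((\<Prod>i\<in>UNIV. bincr b j i + 1) - (\<Prod>i\<in>UNIV. bincr b j i))) powr e)"
    by (simp add: sum_mono flip: sum.distrib)
  also have "(\<Sum>j\<in>H. (c j / real k1 * dy ^ n * (\<Prod>i\<in>UNIV. bincr b j i)) powr e) \<le> Jbar f + \<epsilon> / 2"
    unfolding e_def dy_def n_def
  proof (rule sum_root_main_terms_le_Jbar_plus[OF k b ep _ f0M _ H _ c0])
    show "f \<in> borel_measurable borel" using piecewise_constant_borel_measurable[OF L pc fz] .
    show "f x = 0" if "x \<notin> unit_cube" for x using fz that by blast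
    show "f x = c j" if "j \<in> H" "x \<in> Rset k1 k2 b j" for j x
      using piecewise_constant_on_Qcube[OF L pc, of "\<alpha> j" x] \<alpha>[OF that(1)] that by (auto simp: c_def)
  qed
  also have "(\<Sum>j\<in>H. (c j / real k1 * dy ^ n * ((\<Prod>i\<in>UNIV. bincr b j i + 1) - (\<Prod>i\<in>UNIV. bincr b j i))) powr e)
      \<le> real (card H) * (\<epsilon> / (2 * real k1))"
  proof (rule sum_bounded_above)
    fix j assume "j \<in> H"
    hence "j \<in> {1..k1}" using H by auto
    show "(c j / real k1 * dy ^ n * ((\<Prod>i\<in>UNIV. bincr b j i + 1) - (\<Prod>i\<in>UNIV. bincr b j i))) powr e
        \<le> \<epsilon> / (2 * real k1)"
      using root_error_term_le[of UNIV "bincr b j" k1 k2 "c j" Lam \<epsilon>] hk ep k c0 c_Lam[OF \<open>j \<in> H\<close>]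
        bincr_nonneg[OF b \<open>j \<in> {1..k1}\<close>] bincr_le[OF b \<open>j \<in> {1..k1}\<close>]
      by (simp add: e_def n_def dy_def dim_of_def)
  qed
  also have "\<dots> \<le> \<epsilon> / 2"
    using card_mono[OF _ H] ep k by (simp add: field_simps)
  finally show ?thesis unfolding H_def by simp
qed

theorem lemma3p3:
  "\<exists>C>0. \<forall>(L::nat) (f :: (real^'m::finite) \<times> real \<Rightarrow> real).
     L \<ge> 1 \<and> (\<forall>x\<in>unit_cube. 0 \<le> f x) \<and> (\<forall>x. x \<notin> unit_cube \<longrightarrow> f x = 0) \<and>
     piecewise_constant L f \<longrightarrow>
     (\<forall>\<epsilon>>0. \<forall>k1 k2::nat. k1 \<ge> 1 \<and> k2 \<ge> 1 \<and> k1 \<ge> L \<and>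
        real k2 \<ge> C * real_of_ereal (Linf_norm f) * real k1 ^ (dim_of TYPE('m) - 1) / \<epsilon> ^ dim_of TYPE('m) \<longrightarrow>
        (\<forall>b\<in>Phi k1 k2. (\<Sum>j\<in>Hset L k1 k2 b. pval f k1 k2 b j powr (1 / real (dim_of TYPE('m))))
            \<le> Jbar f + \<epsilon>))"
proof (rule exI[of _ "4 ^ dim_of TYPE('m) * real (dim_of TYPE('m))"], intro conjI allI impI ballI)
  show "0 < (4::real) ^ dim_of TYPE('m) * real (dim_of TYPE('m))" by (simp add: dim_of_def)
next
  fix L \<epsilon> k1 k2 and f :: "(real^'m) \<times> real \<Rightarrow> real" and b :: "nat \<Rightarrow> nat^'m"
  assume "L \<ge> 1 \<and> (\<forall>x\<in>unit_cube. 0 \<le> f x) \<and> (\<forall>x. x \<notin> unit_cube \<longrightarrow> f x = 0) \<and> piecewise_constant L f"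
    and "\<epsilon> > 0" and "b \<in> Phi k1 k2"
    and "k1 \<ge> 1 \<and> k2 \<ge> 1 \<and> k1 \<ge> L \<and> real k2 \<ge> 4 ^ dim_of TYPE('m) * real (dim_of TYPE('m))
       * real_of_ereal (Linf_norm f) * real k1 ^ (dim_of TYPE('m) - 1) / \<epsilon> ^ dim_of TYPE('m)"
  thus "(\<Sum>j\<in>Hset L k1 k2 b. pval f k1 k2 b j powr (1 / real (dim_of TYPE('m)))) \<le> Jbar f + \<epsilon>"
    using sum_root_pval_le_Jbar[of L f \<epsilon> k1 k2 b] by (simp add: dim_of_def)
qed

end
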